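(* Assume $x(0)=x'(0)=0$. Then $x(t)\to0$ as $t\to\infty$ if and only if all three of the following hold: (1) $y_2(t)\to0$ as $t\to\infty$; (2) $\int_0^t\cos(\omega s)A(s)y_2(s)\,ds=o(A(t))$ as $t\to\infty$; (3) $\int_0^t\sin(\omega s)A(s)y_2(s)\,ds=o(A(t))$ as $t\to\infty$.
   Context: Standing assumptions: $\omega>0$ is a constant; $p\in C^1([0,\infty))$ with $p(t)>0$ and $p'(t)<0$ for all $t\ge0$, $\int_0^\infty p(t)\,dt=\infty$ and $\int_0^\infty p(t)^2\,dt<\infty$; $f\in L^1_{\mathrm{loc}}([0,\infty))$. $x$ denotes the solution of $x''(t)+p(t)x'(t)+\omega^2x(t)=f(t)$, $t\ge0$. Notation: $A(t)=\exp(\frac12\int_0^tp(s)\,ds)$ (so $A(t)\to\infty$); $y_1(t)=\int_0^te^{-\omega^2(t-s)}f(s)\,ds$; $y_2(t)=\int_0^te^{-\omega^2(t-s)}y_1(s)\,ds=\int_0^t(t-s)e^{-\omega^2(t-s)}f(s)\,ds$. *)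

theory Defs
  imports "HOL-Analysis.Analysis" "HOL-Library.Landau_Symbols"
begin

definition Afun :: "(real \<Rightarrow> real) \<Rightarrow> real \<Rightarrow> real" where
  "Afun p t = exp ((1/2) * integral {0..t} p)"

definition y1fun :: "real \<Rightarrow> (real \<Rightarrow> real) \<Rightarrow> real \<Rightarrow> real" where
  "y1fun \<omega> f t = set_lebesgue_integral lborel {0..t} (\<lambda>s. exp (-(\<omega>^2) * (t - s)) * f s)"

definition y2fun :: "real \<Rightarrow> (real \<Rightarrow> real) \<Rightarrow> real \<Rightarrow> real" where
  "y2fun \<omega> f t = set_lebesgue_integral lborel {0..t} (\<lambda>s. exp (-(\<omega>^2) * (t - s)) * y1fun \<omega> f s)"

end

theory Submission
  imports Defs "HOL-Real_Asymp.Real_Asymp"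
begin

text \<open>
  Write \<open>w = \<omega>\<^sup>2\<close>. With zero initial data \<open>y\<^sub>2\<close> solves \<open>(D + w)\<^sup>2 y\<^sub>2 = f\<close>, while \<open>x\<close> solves
  \<open>x'' + p x' + w x = f\<close>. For a test function \<open>\<phi>\<close> there is a Lagrange identity: a combination
  \<open>W \<phi>\<close> of \<open>x\<close>, \<open>y\<^sub>2\<close> and primitives of \<open>f\<close> vanishes at \<open>0\<close> and its derivative involves only
  \<open>x\<close> and \<open>y\<^sub>2\<close>. Two choices of \<open>\<phi>\<close> do the work.

  For \<open>\<phi>(s) = (t - s) e\<^bsup>w s\<^esup>\<close> the \<open>y\<^sub>2\<close>-term disappears and \<open>x - y\<^sub>2\<close> is a convolution of \<open>x\<close>
  with a kernel bounded by \<open>e\<^bsup>-w (t - s) / 2\<^esup> (1 - p')\<close>; so \<open>x \<rightarrow> 0\<close> forces \<open>y\<^sub>2 \<rightarrow> 0\<close>.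

  For \<open>\<phi> = A cos \<omega>s\<close> and \<open>\<phi> = A sin \<omega>s\<close> (the Liouville substitution; the new potential
  \<open>q = p\<^sup>2/4 + p'/2\<close> is integrable because \<open>p\<^sup>2\<close> is and \<open>p\<close> decreases), \<open>sin \<omega>t \<cdot> W\<^sub>c - cos \<omega>t \<cdot> W\<^sub>s\<close>
  equals \<open>\<omega> A (x - y\<^sub>2)\<close>, and each \<open>W\<close> is an invertible combination of the integrals in (2) and
  (3) plus error terms. If \<open>x \<rightarrow> 0\<close> the errors are \<open>o(A)\<close>, and comparing the identity at \<open>t\<close>
  and at \<open>t + \<pi>/(2\<omega>)\<close> separates the two integrals. Conversely, under (1)-(3) the quantity
  \<open>|W\<^sub>c| + |W\<^sub>s|\<close> satisfies a linear integral inequality with the integrable kernel \<open>2|q|/\<omega>\<close>,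
  so a Gronwall argument makes it \<open>o(A)\<close>, whence \<open>x - y\<^sub>2 \<rightarrow> 0\<close>.
\<close>

section \<open>Integrals on a half-line\<close>

lemma continuous_atLeast_integrable_on:
  fixes g :: "real \<Rightarrow> real"
  assumes "continuous_on {0..} g" "0 \<le> a"
  shows "g integrable_on {a..b}"
  using assms by (auto intro!: integrable_continuous_interval elim: continuous_on_subset)

lemma continuous_atLeast_set_integrable:
  fixes g :: "real \<Rightarrow> real"
  assumes "continuous_on {0..} g" "0 \<le> a"
  shows "set_integrable lborel {a..b} g"
  using assms by (auto intro!: borel_integrable_atLeastAtMost' elim: continuous_on_subset)

lemma continuous_atLeast_set_integral_eq:
  fixes g :: "real \<Rightarrow> real"
  assumes "continuous_on {0..} g" "0 \<le> a"
  shows "(LINT s:{a..b}|lborel. g s) = integral {a..b} g"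
  by (intro set_borel_integral_eq_integral continuous_atLeast_set_integrable assms)

lemma continuous_atLeast_integral_combine:
  fixes g :: "real \<Rightarrow> real"
  assumes "continuous_on {0..} g" "0 \<le> a" "a \<le> b"
  shows "integral {0..b} g = integral {0..a} g + integral {a..b} g"
  using Henstock_Kurzweil_Integration.integral_combine[of 0 a b g]
    continuous_atLeast_integrable_on[OF assms(1), of 0 b] assms by simp

lemma continuous_atLeast_integral_has_derivative:
  fixes g :: "real \<Rightarrow> real"
  assumes "continuous_on {0..} g" "0 \<le> s" "s \<le> T"
  shows "((\<lambda>t. integral {0..t} g) has_real_derivative g s) (at s within {0..T})"
  using assms by (intro integral_has_real_derivative) (auto elim: continuous_on_subset)

lemma continuous_atLeast_integral_continuous:
  fixes g :: "real \<Rightarrow> real"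
  assumes "continuous_on {0..} g"
  shows "continuous_on {0..} (\<lambda>t. integral {0..t} g)"
  unfolding continuous_on_eq_continuous_within
proof
  fix s :: real assume s: "s \<in> {0..}"
  then have "at s within {0..s+1} = at s within {0..}"
    by (intro at_within_nhd[of _ "{..<s+1}"]) auto
  with continuous_atLeast_integral_has_derivative[OF assms, of s "s+1"] s
  show "continuous (at s within {0..}) (\<lambda>t. integral {0..t} g)"
    by (auto dest: DERIV_continuous)
qed

lemma lborel_integral_exp_derivative:
  fixes w s t :: real
  assumes "s \<le> t"
  shows "(\<integral>r. indicator {s..t} r * (w * exp (w * r)) \<partial>lborel) = exp (w * t) - exp (w * s)"
proof -
  have "(\<integral>r. indicator {s..t} r *\<^sub>R (w * exp (w * r)) \<partial>lborel) = exp (w * t) - exp (w * s)"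
    by (rule integral_FTC_atLeastAtMost[OF assms])
       (auto intro!: derivative_eq_intros continuous_intros
         simp: has_real_derivative_iff_has_vector_derivative[symmetric])
  then show ?thesis by simp
qed

lemma integrable_lower_triangle_exp:
  fixes g :: "real \<Rightarrow> real" and w t :: real
  assumes g: "integrable lborel g" and w: "0 < w"
  shows "integrable (lborel \<Otimes>\<^sub>M lborel) (\<lambda>(s, r). g s * (indicator {s..t} r * (w * exp (w * r))))"
    (is "integrable _ ?h")
proof (rule lborel_pair.Fubini_integrable)
  have [measurable]: "g \<in> borel_measurable lborel" using g by auto
  have "indicator {s..t} r = (if s \<le> r \<and> r \<le> t then 1 else (0::real))" for s r :: real
    by (auto simp: indicator_def)
  then show "?h \<in> borel_measurable (lborel \<Otimes>\<^sub>M lborel)"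
    by simp measurable
  have "(\<integral>r. norm (?h (s, r)) \<partial>lborel) = \<bar>g s\<bar> * (if s \<le> t then exp (w * t) - exp (w * s) else 0)" for s
  proof -
    have "(\<lambda>r. norm (?h (s, r))) = (\<lambda>r. \<bar>g s\<bar> * (indicator {s..t} r * (w * exp (w * r))))"
      using w by (auto simp: abs_mult fun_eq_iff indicator_def)
    then show ?thesis by (simp add: lborel_integral_exp_derivative)
  qed
  moreover have "integrable lborel (\<lambda>s. \<bar>g s\<bar> * (if s \<le> t then exp (w * t) - exp (w * s) else 0))"
  proof (rule Bochner_Integration.integrable_bound)
    show "integrable lborel (\<lambda>s. \<bar>g s\<bar> * exp (w * t))"
      using g by (intro integrable_mult_left integrable_abs)
    have "\<bar>exp (w * t) - exp (w * s)\<bar> \<le> exp (w * t)" if "s \<le> t" for s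
      using that w by (simp add: abs_le_iff)
    then show "AE s in lborel. norm (\<bar>g s\<bar> * (if s \<le> t then exp (w * t) - exp (w * s) else 0))
        \<le> norm (\<bar>g s\<bar> * exp (w * t))"
      by (auto simp: abs_mult intro!: mult_left_mono)
  qed measurable
  ultimately show "integrable lborel (\<lambda>s. \<integral>r. norm (?h (s, r)) \<partial>lborel)"
    by simp
  have "integrable lborel (\<lambda>r. g s * (indicator {s..t} r * (w * exp (w * r))))" for s
  proof -
    have "set_integrable lborel {s..t} (\<lambda>r. w * exp (w * r))"
      by (intro borel_integrable_atLeastAtMost' continuous_intros)
    then show ?thesis unfolding set_integrable_def by simp
  qed
  then show "AE s in lborel. integrable lborel (\<lambda>r. ?h (s, r))"
    by simp
qed

lemma set_integral_exp_mult_by_parts: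
  fixes f :: "real \<Rightarrow> real" and w t :: real
  assumes f: "set_integrable lborel {0..t} f" and w: "0 < w"
  shows "(LINT s:{0..t}|lborel. exp (w * s) * f s) =
     exp (w * t) * (LINT s:{0..t}|lborel. f s)
     - (LINT r:{0..t}|lborel. w * exp (w * r) * (LINT s:{0..r}|lborel. f s))"
proof -
  define g where "g s = indicator {0..t} s * f s" for s
  have g: "integrable lborel g" using f unfolding set_integrable_def g_def by simp
  define h where "h s r = g s * (indicator {s..t} r * (w * exp (w * r)))" for s r
  have h: "integrable (lborel \<Otimes>\<^sub>M lborel) (\<lambda>(s, r). h s r)"
    using integrable_lower_triangle_exp[OF g w] by (simp add: h_def)
  have inner_r: "(\<integral>r. h s r \<partial>lborel) = g s * (exp (w * t) - exp (w * s))" for s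
    by (cases "s \<le> t") (simp_all add: h_def g_def lborel_integral_exp_derivative)
  have inner_s: "(\<integral>s. h s r \<partial>lborel) = indicator {0..t} r * (w * exp (w * r) * (LINT s:{0..r}|lborel. f s))" for r
  proof -
    have "(\<lambda>s. h s r) = (\<lambda>s. (indicator {0..t} r * (w * exp (w * r))) * (indicator {0..r} s * f s))"
      by (auto simp: h_def g_def fun_eq_iff indicator_def)
    then show ?thesis by (simp add: set_lebesgue_integral_def)
  qed
  have "integrable lborel (\<lambda>s. g s * exp (w * t) - (\<integral>r. h s r \<partial>lborel))"
    using g lborel_pair.integrable_fst[OF h] by (intro Bochner_Integration.integrable_diff) auto
  then have ge: "integrable lborel (\<lambda>s. g s * exp (w * s))"
    by (simp add: inner_r algebra_simps)
  have "(\<integral>s. \<integral>r. h s r \<partial>lborel \<partial>lborel) = (\<integral>s. g s * exp (w * t) - g s * exp (w * s) \<partial>lborel)"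
    by (simp add: inner_r algebra_simps)
  also have "\<dots> = exp (w * t) * integral\<^sup>L lborel g - (\<integral>s. g s * exp (w * s) \<partial>lborel)"
    using g ge by (simp add: mult.commute)
  also have "integral\<^sup>L lborel g = (LINT s:{0..t}|lborel. f s)"
    by (simp add: g_def[abs_def] set_lebesgue_integral_def)
  also have "(\<integral>s. g s * exp (w * s) \<partial>lborel) = (LINT s:{0..t}|lborel. exp (w * s) * f s)"
    by (simp add: g_def set_lebesgue_integral_def mult_ac)
  finally have "(\<integral>s. \<integral>r. h s r \<partial>lborel \<partial>lborel)
      = exp (w * t) * (LINT s:{0..t}|lborel. f s) - (LINT s:{0..t}|lborel. exp (w * s) * f s)" .
  moreover have "(\<integral>r. \<integral>s. h s r \<partial>lborel \<partial>lborel)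
      = (LINT r:{0..t}|lborel. w * exp (w * r) * (LINT s:{0..r}|lborel. f s))"
    by (simp add: inner_s set_lebesgue_integral_def)
  ultimately show ?thesis
    using lborel_pair.Fubini_integral[OF h] by linarith
qed

lemma integral_exp_kernel_le:
  fixes c a t :: real
  assumes c: "c > 0" and at: "a \<le> t"
  shows "integral {a..t} (\<lambda>s. exp (-(c * (t - s)))) \<le> 1 / c"
proof -
  have "((\<lambda>s. exp (-(c * (t - s)))) has_integral (exp (-(c * (t - t))) / c - exp (-(c * (t - a))) / c)) {a..t}"
    using c by (intro fundamental_theorem_of_calculus[OF at])
      (auto intro!: derivative_eq_intros simp: has_real_derivative_iff_has_vector_derivative[symmetric])
  then have "integral {a..t} (\<lambda>s. exp (-(c * (t - s)))) = 1 / c - exp (-(c * (t - a))) / c"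
    by (simp add: integral_unique)
  also have "\<dots> \<le> 1 / c" using c by simp
  finally show ?thesis .
qed

lemma exp_mult_one_plus_le:
  fixes c u :: real
  assumes c: "c > 0" and u: "u \<ge> 0"
  shows "exp (-(c * u)) * (1 + u) \<le> (1 + 2 / c) * exp (-((c / 2) * u))"
proof -
  have "c * u / 2 \<le> exp (c * u / 2)"
    using exp_ge_add_one_self[of "c * u / 2"] by linarith
  then have "u \<le> (2 / c) * exp (c * u / 2)"
    using c by (simp add: field_simps)
  then have "u * exp (-(c * u)) \<le> (2 / c) * exp (c * u / 2) * exp (-(c * u))"
    by (intro mult_right_mono) auto
  also have "\<dots> = (2 / c) * exp (-((c / 2) * u))"
    by (simp add: mult.assoc exp_add[symmetric] field_simps)
  finally have "u * exp (-(c * u)) \<le> (2 / c) * exp (-((c / 2) * u))" .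
  moreover have "exp (-(c * u)) \<le> exp (-((c / 2) * u))"
    using c u by simp
  moreover have "exp (-(c * u)) * (1 + u) = exp (-(c * u)) + u * exp (-(c * u))"
    "(1 + 2 / c) * exp (-((c / 2) * u)) = exp (-((c / 2) * u)) + (2 / c) * exp (-((c / 2) * u))"
    by (simp_all add: algebra_simps)
  ultimately show ?thesis by linarith
qed

section \<open>Limits and little-o at infinity\<close>

lemma bounded_mono_tail_le:
  fixes F :: "real \<Rightarrow> real"
  assumes mono: "\<And>a b. 0 \<le> a \<Longrightarrow> a \<le> b \<Longrightarrow> F a \<le> F b" and bound: "\<And>t. t \<ge> 0 \<Longrightarrow> F t \<le> M"
    and e: "e > 0"
  shows "\<exists>T\<ge>0. \<forall>t\<ge>T. F t - F T \<le> e"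
proof -
  define S where "S = Sup (F ` {0..})"
  have bdd: "bdd_above (F ` {0..})" using bound by (auto intro!: bdd_aboveI[of _ M])
  have le_S: "F t \<le> S" if "t \<ge> 0" for t unfolding S_def using that bdd by (intro cSup_upper) auto
  obtain T where T: "T \<ge> 0" "S - e < F T"
    using less_cSupD[of "F ` {0..}" "S - e"] e unfolding S_def by auto
  have "F t - F T \<le> e" if "t \<ge> T" for t
    using le_S[of t] T that by linarith
  then show ?thesis using T by blast
qed

lemma tendsto_zero_eventually_abs_le:
  fixes z :: "real \<Rightarrow> real"
  assumes "(z \<longlongrightarrow> 0) at_top" "d > 0"
  shows "\<exists>T\<ge>0. \<forall>s\<ge>T. \<bar>z s\<bar> \<le> d"
proof -
  from tendstoD[OF assms] obtain T where "\<forall>s\<ge>T. \<bar>z s\<bar> < d"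
    by (auto simp: dist_real_def eventually_at_top_linorder)
  then show ?thesis by (intro exI[of _ "max T 0"]) auto
qed

lemma tendsto_cong_nonneg:
  fixes g h :: "real \<Rightarrow> real"
  assumes "\<And>t. t \<ge> 0 \<Longrightarrow> g t = h t"
  shows "(g \<longlongrightarrow> l) at_top \<longleftrightarrow> (h \<longlongrightarrow> l) at_top"
  using assms by (intro tendsto_cong) (auto simp: eventually_at_top_linorder)

lemma smallo_cong_nonneg:
  fixes g h k :: "real \<Rightarrow> real"
  assumes "\<And>t. t \<ge> 0 \<Longrightarrow> g t = h t"
  shows "g \<in> o[at_top](k) \<longleftrightarrow> h \<in> o[at_top](k)"
  using assms by (intro landau_o.small.in_cong) (auto simp: eventually_at_top_linorder)

lemma smallo_bounded_mult:
  fixes c g h :: "'a \<Rightarrow> real"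
  assumes c: "\<And>t. \<bar>c t\<bar> \<le> 1" and g: "g \<in> o[F](h)"
  shows "(\<lambda>t. c t * g t) \<in> o[F](h)"
proof (rule landau_o.smallI)
  fix e :: real assume "e > 0"
  with landau_o.smallD[OF g] have "eventually (\<lambda>t. norm (g t) \<le> e * norm (h t)) F" by blast
  then show "eventually (\<lambda>t. norm (c t * g t) \<le> e * norm (h t)) F"
  proof eventually_elim
    case (elim t)
    have "\<bar>c t\<bar> * \<bar>g t\<bar> \<le> \<bar>g t\<bar>" using c[of t] by (intro mult_left_le_one_le) auto
    with elim show ?case by (simp add: abs_mult)
  qed
qed

lemma tendsto_zero_mult_in_smallo:
  fixes z h :: "'a \<Rightarrow> real"
  assumes "(z \<longlongrightarrow> 0) F"
  shows "(\<lambda>t. h t * z t) \<in> o[F](h)"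
proof -
  have "z \<in> o[F](\<lambda>_. 1)" using assms by (intro smalloI_tendsto) auto
  from landau_o.small.mult_left[OF this, of h] show ?thesis by simp
qed

lemma smallo_of_rotation:
  fixes u v h :: "'a \<Rightarrow> real"
  assumes D: "a\<^sup>2 + b\<^sup>2 \<noteq> 0"
    and "(\<lambda>t. a * u t + b * v t) \<in> o[F](h)" "(\<lambda>t. a * v t - b * u t) \<in> o[F](h)"
  shows "u \<in> o[F](h)" "v \<in> o[F](h)"
proof -
  have "(\<lambda>t. a * (a * u t + b * v t) - b * (a * v t - b * u t)) \<in> o[F](h)"
    "(\<lambda>t. b * (a * u t + b * v t) + a * (a * v t - b * u t)) \<in> o[F](h)"
    using assms(2,3) by (intro sum_in_smallo; simp)+
  moreover have "(\<lambda>t. a * (a * u t + b * v t) - b * (a * v t - b * u t)) = (\<lambda>t. (a\<^sup>2 + b\<^sup>2) * u t)"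
    "(\<lambda>t. b * (a * u t + b * v t) + a * (a * v t - b * u t)) = (\<lambda>t. (a\<^sup>2 + b\<^sup>2) * v t)"
    by (auto simp: fun_eq_iff algebra_simps power2_eq_square)
  ultimately show "u \<in> o[F](h)" "v \<in> o[F](h)"
    using D by auto
qed

lemma exists_pos_mult_abs_le:
  fixes e M :: real
  assumes "e > 0"
  shows "\<exists>d>0. d * \<bar>M\<bar> \<le> e"
proof -
  define d where "d = e / (\<bar>M\<bar> + 1)"
  have M1: "\<bar>M\<bar> + 1 > 0" by (simp add: add_nonneg_pos)
  have "d * (\<bar>M\<bar> + 1) = e" using M1 by (simp add: d_def field_simps)
  moreover have "d > 0" using assms M1 by (simp add: d_def)
  ultimately have "d > 0 \<and> d * \<bar>M\<bar> \<le> e" unfolding distrib_left by linarith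
  then show ?thesis by blast
qed

lemma integral_weighted_null_in_smallo:
  fixes k z \<rho> h :: "real \<Rightarrow> real"
  assumes k: "continuous_on {0..} k" and z: "continuous_on {0..} z" "(z \<longlongrightarrow> 0) at_top"
    and \<rho>: "continuous_on {0..} \<rho>" "\<And>s. s \<ge> 0 \<Longrightarrow> \<bar>k s\<bar> \<le> \<rho> s"
    and tail: "\<And>a t. 0 \<le> a \<Longrightarrow> a \<le> t \<Longrightarrow> integral {a..t} \<rho> \<le> M * h t"
    and const: "\<And>c. (\<lambda>_. c) \<in> o[at_top](h)"
  shows "(\<lambda>t. integral {0..t} (\<lambda>s. k s * z s)) \<in> o[at_top](h)"
proof (rule landau_o.smallI)
  fix e :: real assume e: "e > 0"
  obtain d where d: "d > 0" "d * \<bar>M\<bar> \<le> e / 2"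
    using exists_pos_mult_abs_le[of "e / 2" M] e by auto
  obtain T where T: "T \<ge> 0" "\<forall>s\<ge>T. \<bar>z s\<bar> \<le> d"
    using tendsto_zero_eventually_abs_le[OF z(2) d(1)] by auto
  have kz: "continuous_on {0..} (\<lambda>s. k s * z s)" by (intro continuous_intros k z)
  have tail: "\<bar>integral {T..t} (\<lambda>s. k s * z s)\<bar> \<le> (e / 2) * \<bar>h t\<bar>" if t: "T \<le> t" for t
  proof -
    have "norm (integral {T..t} (\<lambda>s. k s * z s)) \<le> integral {T..t} (\<lambda>s. d * \<rho> s)"
    proof (rule integral_norm_bound_integral)
      show "(\<lambda>s. k s * z s) integrable_on {T..t}" "(\<lambda>s. d * \<rho> s) integrable_on {T..t}"
        using T by (auto intro!: continuous_atLeast_integrable_on continuous_intros kz \<rho>(1))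
      show "norm (k s * z s) \<le> d * \<rho> s" if "s \<in> {T..t}" for s
      proof -
        have "\<bar>k s\<bar> * \<bar>z s\<bar> \<le> \<rho> s * d"
          using that T \<rho>(2)[of s] by (intro mult_mono) auto
        then show ?thesis by (simp add: abs_mult mult.commute)
      qed
    qed
    also have "\<dots> \<le> d * (M * h t)"
      using tail[OF T(1) t] d by (simp add: mult_left_mono)
    also have "\<dots> \<le> (d * \<bar>M\<bar>) * \<bar>h t\<bar>"
    proof -
      have "M * h t \<le> \<bar>M\<bar> * \<bar>h t\<bar>" by (metis abs_ge_self abs_mult)
      then show ?thesis using d by (simp add: mult.assoc mult_left_mono)
    qed
    also have "\<dots> \<le> (e / 2) * \<bar>h t\<bar>"
      using mult_right_mono[OF d(2) abs_ge_zero[of "h t"]] .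
    finally show ?thesis by simp
  qed
  have "eventually (\<lambda>t. \<bar>integral {0..T} (\<lambda>s. k s * z s)\<bar> \<le> (e / 2) * \<bar>h t\<bar>) at_top"
    using landau_o.smallD[OF const, of "e / 2"] e by simp
  then show "eventually (\<lambda>t. norm (integral {0..t} (\<lambda>s. k s * z s)) \<le> e * norm (h t)) at_top"
    using eventually_ge_at_top[of T]
  proof eventually_elim
    case (elim t)
    then show ?case
      using continuous_atLeast_integral_combine[OF kz T(1) elim(2)] tail[OF elim(2)] by simp
  qed
qed

lemma exp_convolution_split_le:
  fixes z \<rho> :: "real \<Rightarrow> real" and c d M T t :: real
  assumes z: "continuous_on {0..} z" "\<And>s. s \<ge> T \<Longrightarrow> \<bar>z s\<bar> \<le> d"
    and \<rho>: "continuous_on {0..} \<rho>" "\<And>s. s \<ge> 0 \<Longrightarrow> \<rho> s \<ge> 0"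
    and tail: "integral {T..t} (\<lambda>s. exp (-(c * (t - s))) * \<rho> s) \<le> M" and d: "d \<ge> 0"
    and T: "0 \<le> T" "T \<le> t"
  shows "integral {0..t} (\<lambda>s. exp (-(c * (t - s))) * \<rho> s * \<bar>z s\<bar>)
    \<le> exp (-(c * (t - T))) * integral {0..T} (\<lambda>s. exp (-(c * (T - s))) * \<rho> s * \<bar>z s\<bar>) + d * M"
proof -
  define h where "h s = exp (-(c * (t - s))) * \<rho> s * \<bar>z s\<bar>" for s
  have hc: "continuous_on {0..} h" unfolding h_def[abs_def] by (intro continuous_intros z \<rho>)
  have "integral {0..T} h = integral {0..T} (\<lambda>s. exp (-(c * (t - T))) * (exp (-(c * (T - s))) * \<rho> s * \<bar>z s\<bar>))"
    unfolding h_def by (rule integral_cong) (simp add: exp_add[symmetric] algebra_simps)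
  then have head: "integral {0..T} h = exp (-(c * (t - T))) * integral {0..T} (\<lambda>s. exp (-(c * (T - s))) * \<rho> s * \<bar>z s\<bar>)"
    by simp
  have "integral {T..t} h \<le> integral {T..t} (\<lambda>s. d * (exp (-(c * (t - s))) * \<rho> s))"
  proof (rule integral_le)
    show "h integrable_on {T..t}" "(\<lambda>s. d * (exp (-(c * (t - s))) * \<rho> s)) integrable_on {T..t}"
      using T by (auto intro!: continuous_atLeast_integrable_on continuous_intros hc \<rho>(1))
    show "h s \<le> d * (exp (-(c * (t - s))) * \<rho> s)" if "s \<in> {T..t}" for s
    proof -
      have "exp (-(c * (t - s))) * \<rho> s \<ge> 0" using that T \<rho>(2)[of s] by simp
      then have "exp (-(c * (t - s))) * \<rho> s * \<bar>z s\<bar> \<le> exp (-(c * (t - s))) * \<rho> s * d"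
        using that z(2)[of s] by (intro mult_left_mono) auto
      then show ?thesis by (simp add: h_def mult.commute)
    qed
  qed
  also have "\<dots> \<le> d * M"
    using tail d by (simp add: mult_left_mono)
  finally have "integral {T..t} h \<le> d * M" .
  moreover have "integral {0..t} h = integral {0..T} h + integral {T..t} h"
    using T by (intro continuous_atLeast_integral_combine[OF hc])
  ultimately show ?thesis
    using head by (simp add: h_def[abs_def])
qed

lemma exp_convolution_tendsto_zero:
  fixes z \<rho> :: "real \<Rightarrow> real" and c M :: real
  assumes c: "c > 0" and z: "continuous_on {0..} z" "(z \<longlongrightarrow> 0) at_top"
    and \<rho>: "continuous_on {0..} \<rho>" "\<And>s. s \<ge> 0 \<Longrightarrow> \<rho> s \<ge> 0"
    and tail: "\<And>a t. 0 \<le> a \<Longrightarrow> a \<le> t \<Longrightarrow> integral {a..t} (\<lambda>s. exp (-(c * (t - s))) * \<rho> s) \<le> M"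
  shows "((\<lambda>t. integral {0..t} (\<lambda>s. exp (-(c * (t - s))) * \<rho> s * \<bar>z s\<bar>)) \<longlongrightarrow> 0) at_top"
proof (rule tendstoI)
  fix e :: real assume e: "e > 0"
  obtain d where d: "d > 0" "d * \<bar>M\<bar> \<le> e / 2"
    using exists_pos_mult_abs_le[of "e / 2" M] e by auto
  obtain T where T: "T \<ge> 0" "\<forall>s\<ge>T. \<bar>z s\<bar> \<le> d"
    using tendsto_zero_eventually_abs_le[OF z(2) d(1)] by auto
  define m where "m = integral {0..T} (\<lambda>s. exp (-(c * (T - s))) * \<rho> s * \<bar>z s\<bar>)"
  have "((\<lambda>t. exp (-(c * (t - T))) * m) \<longlongrightarrow> 0) at_top" using c by real_asymp
  from tendstoD[OF this, of "e / 2"] e obtain T2 where T2: "\<forall>t\<ge>T2. \<bar>exp (-(c * (t - T))) * m\<bar> < e / 2"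
    by (auto simp: eventually_at_top_linorder)
  have "dist (integral {0..t} (\<lambda>s. exp (-(c * (t - s))) * \<rho> s * \<bar>z s\<bar>)) 0 < e" if t: "max T T2 \<le> t" for t
  proof -
    have "integral {0..t} (\<lambda>s. exp (-(c * (t - s))) * \<rho> s * \<bar>z s\<bar>) \<le> exp (-(c * (t - T))) * m + d * M"
      unfolding m_def using T t d tail[of T t]
      by (intro exp_convolution_split_le z(1) \<rho>) auto
    moreover have "d * M \<le> e / 2"
      using d mult_left_mono[OF abs_ge_self[of M], of d] by linarith
    moreover have "0 \<le> integral {0..t} (\<lambda>s. exp (-(c * (t - s))) * \<rho> s * \<bar>z s\<bar>)"
      using t T \<rho>(2)
      by (intro integral_nonneg continuous_atLeast_integrable_on continuous_intros z(1) \<rho>(1)) auto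
    ultimately show ?thesis
      using T2[rule_format, of t] t by (simp add: dist_real_def abs_less_iff)
  qed
  then show "eventually (\<lambda>t. dist (integral {0..t} (\<lambda>s. exp (-(c * (t - s))) * \<rho> s * \<bar>z s\<bar>)) 0 < e) at_top"
    unfolding eventually_at_top_linorder by blast
qed

lemma integral_inequality_max_bound:
  fixes u B k :: "real \<Rightarrow> real"
  assumes u: "continuous_on {0..} u" "\<And>t. t \<ge> 0 \<Longrightarrow> u t \<ge> 0"
    and k: "continuous_on {0..} k" "\<And>s. s \<ge> 0 \<Longrightarrow> k s \<ge> 0"
    and Ta: "0 \<le> Ta" "\<And>t. Ta \<le> t \<Longrightarrow> integral {Ta..t} k \<le> 1/2"
    and ineq: "\<And>t. t \<ge> 0 \<Longrightarrow> u t \<le> B t + integral {0..t} (\<lambda>s. k s * u s)"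
    and t: "Ta \<le> t"
  shows "\<exists>s\<in>{Ta..t}. u t \<le> 2 * (B s + integral {0..Ta} (\<lambda>s. k s * u s))"
proof -
  obtain m where m: "m \<in> {Ta..t}" "\<forall>s\<in>{Ta..t}. u s \<le> u m"
  proof -
    have "continuous_on {Ta..t} u" using Ta(1) by (auto intro: continuous_on_subset[OF u(1)])
    then show ?thesis using continuous_attains_sup[of "{Ta..t}" u] t that by auto
  qed
  have ku: "continuous_on {0..} (\<lambda>s. k s * u s)" by (intro continuous_intros k u)
  have "integral {Ta..m} (\<lambda>s. k s * u s) \<le> integral {Ta..m} (\<lambda>s. k s * u m)"
  proof (rule integral_le)
    show "(\<lambda>s. k s * u s) integrable_on {Ta..m}" "(\<lambda>s. k s * u m) integrable_on {Ta..m}"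
      using Ta(1) by (auto intro!: continuous_atLeast_integrable_on continuous_intros k ku)
    show "k s * u s \<le> k s * u m" if "s \<in> {Ta..m}" for s
      using that m k(2)[of s] Ta(1) by (intro mult_left_mono) auto
  qed
  also have "\<dots> = integral {Ta..m} k * u m" by simp
  also have "\<dots> \<le> (1/2) * u m"
    using Ta m u(2)[of m] by (intro mult_right_mono) auto
  finally have "integral {Ta..m} (\<lambda>s. k s * u s) \<le> u m / 2" by simp
  moreover have "u m \<le> B m + integral {0..Ta} (\<lambda>s. k s * u s) + integral {Ta..m} (\<lambda>s. k s * u s)"
    using ineq[of m] continuous_atLeast_integral_combine[OF ku Ta(1), of m] m Ta(1) by simp
  moreover have "u t \<le> u m" using m t by auto
  ultimately show ?thesis
    using m(1) by (intro bexI[of _ m]) auto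
qed

section \<open>The damping coefficient and the weight A\<close>

locale damped_oscillator =
  fixes \<omega> :: real and p p' f x x' :: "real \<Rightarrow> real"
  assumes \<omega>_pos: "\<omega> > 0"
    and p_deriv: "\<And>t. t \<ge> 0 \<Longrightarrow> (p has_real_derivative p' t) (at t within {0..})"
    and p'_cont: "continuous_on {0..} p'"
    and p_pos: "\<And>t. t \<ge> 0 \<Longrightarrow> p t > 0"
    and p'_neg: "\<And>t. t \<ge> 0 \<Longrightarrow> p' t < 0"
    and p_int_div: "filterlim (\<lambda>t. integral {0..t} p) at_top at_top"
    and p_sq_int: "set_integrable lborel {0..} (\<lambda>t. (p t)^2)"
    and f_loc: "\<And>t. t \<ge> 0 \<Longrightarrow> set_integrable lborel {0..t} f"
    and x_deriv: "\<And>t. t \<ge> 0 \<Longrightarrow> (x has_real_derivative x' t) (at t within {0..})"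
    and x'_cont: "continuous_on {0..} x'"
    and x_ode: "\<And>t. t \<ge> 0 \<Longrightarrow>
        x' t = x' 0 + set_lebesgue_integral lborel {0..t}
                 (\<lambda>s. f s - p s * x' s - \<omega>^2 * x s)"
    and x0: "x 0 = 0" and x'0: "x' 0 = 0"
begin

abbreviation w :: real where "w \<equiv> \<omega>\<^sup>2"

abbreviation A :: "real \<Rightarrow> real" where "A \<equiv> Afun p"

lemma w_pos: "w > 0"
  using \<omega>_pos by simp

lemma p_cont: "continuous_on {0..} p"
  using p_deriv by (auto simp: continuous_on_eq_continuous_within intro: DERIV_continuous)

lemma x_cont: "continuous_on {0..} x"
  using x_deriv by (auto simp: continuous_on_eq_continuous_within intro: DERIV_continuous)

lemma p_deriv_within: "0 \<le> a \<Longrightarrow> t \<in> {a..b} \<Longrightarrow> (p has_real_derivative p' t) (at t within {a..b})"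
  by (rule DERIV_subset[OF p_deriv]) auto

lemma x_deriv_within: "0 \<le> a \<Longrightarrow> t \<in> {a..b} \<Longrightarrow> (x has_real_derivative x' t) (at t within {a..b})"
  by (rule DERIV_subset[OF x_deriv]) auto

lemma p'_has_integral: "0 \<le> a \<Longrightarrow> a \<le> b \<Longrightarrow> (p' has_integral (p b - p a)) {a..b}"
  by (rule fundamental_theorem_of_calculus)
     (auto intro!: p_deriv_within simp: has_real_derivative_iff_has_vector_derivative[symmetric])

lemma p_antimono:
  assumes "0 \<le> a" "a \<le> b"
  shows "p b \<le> p a"
proof -
  have "0 \<le> integral {a..b} (\<lambda>s. - p' s)"
    using assms p'_neg by (intro integral_nonneg has_integral_integrable[OF has_integral_neg[OF p'_has_integral]])
      (auto intro: less_imp_le)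
  then show ?thesis
    using integral_unique[OF has_integral_neg[OF p'_has_integral[OF assms]]] by simp
qed

lemma p_le_p_0: "t \<ge> 0 \<Longrightarrow> p t \<le> p 0"
  using p_antimono[of 0 t] by simp

lemma integral_p_bounds:
  assumes "0 \<le> a" "a \<le> b"
  shows "0 \<le> integral {a..b} p" "integral {a..b} p \<le> p 0 * (b - a)"
proof -
  have int: "p integrable_on {a..b}"
    using assms by (intro continuous_atLeast_integrable_on p_cont)
  show "0 \<le> integral {a..b} p"
    using assms p_pos by (intro integral_nonneg int) (auto intro: less_imp_le)
  have "integral {a..b} p \<le> integral {a..b} (\<lambda>_. p 0)"
    using assms p_le_p_0 by (intro integral_le int) auto
  then show "integral {a..b} p \<le> p 0 * (b - a)"
    using assms by (simp add: mult.commute)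
qed

lemma A_pos: "A t > 0"
  by (simp add: Afun_def)

lemma A_ratio:
  assumes "0 \<le> a" "a \<le> b"
  shows "A b = exp (integral {a..b} p / 2) * A a"
  using continuous_atLeast_integral_combine[OF p_cont assms]
  by (simp add: Afun_def exp_add[symmetric] field_simps)

lemma A_mono: "0 \<le> a \<Longrightarrow> a \<le> b \<Longrightarrow> A a \<le> A b"
  using A_ratio[of a b] integral_p_bounds[of a b] A_pos[of a] by simp

lemma A_shift_le:
  assumes "0 \<le> a" "a \<le> b"
  shows "A b \<le> exp (p 0 * (b - a) / 2) * A a"
  using A_ratio[OF assms] integral_p_bounds[OF assms] A_pos[of a]
  by (simp add: mult_right_mono)

lemma A_deriv:
  assumes "0 \<le> a" "t \<in> {a..b}"
  shows "(A has_real_derivative p t * A t / 2) (at t within {a..b})"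
proof -
  have "(A has_real_derivative p t * A t / 2) (at t within {0..b})"
    unfolding Afun_def[abs_def] using assms
    by (auto intro!: derivative_eq_intros continuous_atLeast_integral_has_derivative[OF p_cont])
  then show ?thesis by (rule DERIV_subset) (use assms in auto)
qed

lemma A_cont: "continuous_on {0..} A"
  unfolding Afun_def[abs_def]
  by (intro continuous_intros continuous_atLeast_integral_continuous p_cont)

lemma filterlim_A_at_top: "filterlim A at_top at_top"
proof -
  have "filterlim (\<lambda>t. (1/2) * integral {0..t} p) at_top at_top"
    using p_int_div by (intro filterlim_tendsto_pos_mult_at_top[where c="1/2"]) auto
  then show ?thesis
    unfolding Afun_def[abs_def] by (rule filterlim_compose[OF exp_at_top])
qed

lemma integral_A_p:
  assumes "0 \<le> a" "a \<le> b"
  shows "integral {a..b} (\<lambda>s. A s * p s) = 2 * (A b - A a)"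
proof -
  have "((\<lambda>s. A s * p s) has_integral (2 * A b - 2 * A a)) {a..b}"
    using assms by (intro fundamental_theorem_of_calculus)
      (auto intro!: derivative_eq_intros A_deriv simp: has_real_derivative_iff_has_vector_derivative[symmetric])
  then show ?thesis by (simp add: integral_unique)
qed

lemma integral_A_neg_p'_le:
  assumes "0 \<le> a" "a \<le> b"
  shows "integral {a..b} (\<lambda>s. - (A s * p' s)) \<le> p 0 * A b"
proof -
  have "integral {a..b} (\<lambda>s. - (A s * p' s)) \<le> integral {a..b} (\<lambda>s. - (A b * p' s))"
  proof (rule integral_le)
    show "(\<lambda>s. - (A s * p' s)) integrable_on {a..b}" "(\<lambda>s. - (A b * p' s)) integrable_on {a..b}"
      using assms by (auto intro!: continuous_atLeast_integrable_on continuous_intros A_cont p'_cont)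
    show "- (A s * p' s) \<le> - (A b * p' s)" if "s \<in> {a..b}" for s
      using that assms A_mono[of s b] p'_neg[of s] by (simp add: mult_right_mono_neg)
  qed
  also have "\<dots> = A b * (p a - p b)"
  proof -
    have I: "integral {a..b} p' = p b - p a" by (rule integral_unique[OF p'_has_integral[OF assms]])
    show ?thesis by (simp add: I algebra_simps)
  qed
  also have "\<dots> \<le> p 0 * A b"
    using mult_right_mono[OF p_le_p_0[of a] less_imp_le[OF A_pos[of b]]]
      mult_pos_pos[OF p_pos[of b] A_pos[of b]] assms by (simp add: algebra_simps)
  finally show ?thesis .
qed

section \<open>The functions y1, y2 and a Lagrange identity\<close>

definition J :: "real \<Rightarrow> real" where
  "J t = integral {0..t} (\<lambda>s. p s * x' s + w * x s)"

definition F :: "real \<Rightarrow> real" where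
  "F t = x' t + J t"

definition N :: "real \<Rightarrow> real" where
  "N t = exp (-(w * t)) * integral {0..t} (\<lambda>s. exp (w * s) * F s)"

definition Y1 :: "real \<Rightarrow> real" where
  "Y1 t = F t - w * N t"

definition Y2 :: "real \<Rightarrow> real" where
  "Y2 t = exp (-(w * t)) * integral {0..t} (\<lambda>s. exp (w * s) * Y1 s)"

lemma J_cont: "continuous_on {0..} J"
  unfolding J_def[abs_def]
  by (intro continuous_atLeast_integral_continuous continuous_intros p_cont x_cont x'_cont)

lemma F_cont: "continuous_on {0..} F"
  unfolding F_def[abs_def] by (intro continuous_intros x'_cont J_cont)

lemma N_cont: "continuous_on {0..} N"
  unfolding N_def[abs_def]
  by (intro continuous_intros continuous_atLeast_integral_continuous F_cont)

lemma Y1_cont: "continuous_on {0..} Y1"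
  unfolding Y1_def[abs_def] by (intro continuous_intros N_cont F_cont)

lemma Y2_cont: "continuous_on {0..} Y2"
  unfolding Y2_def[abs_def]
  by (intro continuous_intros continuous_atLeast_integral_continuous Y1_cont)

lemma J_deriv:
  "0 \<le> s \<Longrightarrow> s \<le> T \<Longrightarrow> (J has_real_derivative p s * x' s + w * x s) (at s within {0..T})"
  unfolding J_def[abs_def]
  by (intro continuous_atLeast_integral_has_derivative continuous_intros p_cont x_cont x'_cont)

lemma N_deriv:
  assumes "0 \<le> s" "s \<le> T"
  shows "(N has_real_derivative F s - w * N s) (at s within {0..T})"
proof -
  have "continuous_on {0..} (\<lambda>s. exp (w * s) * F s)" by (intro continuous_intros F_cont)
  from continuous_atLeast_integral_has_derivative[OF this assms] show ?thesis
    unfolding N_def[abs_def]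
    by (auto intro!: derivative_eq_intros simp: algebra_simps exp_minus field_simps)
qed

lemma Y2_deriv:
  assumes "0 \<le> s" "s \<le> T"
  shows "(Y2 has_real_derivative Y1 s - w * Y2 s) (at s within {0..T})"
proof -
  have "continuous_on {0..} (\<lambda>s. exp (w * s) * Y1 s)" by (intro continuous_intros Y1_cont)
  from continuous_atLeast_integral_has_derivative[OF this assms] show ?thesis
    unfolding Y2_def[abs_def]
    by (auto intro!: derivative_eq_intros simp: algebra_simps exp_minus field_simps)
qed

lemma F_eq_set_integral:
  assumes "0 \<le> t"
  shows "F t = (LINT s:{0..t}|lborel. f s)"
proof -
  have cont: "continuous_on {0..} (\<lambda>s. p s * x' s + w * x s)"
    by (intro continuous_intros p_cont x_cont x'_cont)
  have "x' t = (LINT s:{0..t}|lborel. f s) - (LINT s:{0..t}|lborel. p s * x' s + w * x s)"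
    using x_ode[OF assms] x'0 set_integral_diff(2)[OF f_loc[OF assms] continuous_atLeast_set_integrable[OF cont]]
    by (simp add: diff_diff_eq)
  moreover have "(LINT s:{0..t}|lborel. p s * x' s + w * x s) = J t"
    unfolding J_def by (rule continuous_atLeast_set_integral_eq[OF cont]) simp
  ultimately show ?thesis by (simp add: F_def)
qed

lemma y1fun_eq:
  assumes t: "0 \<le> t"
  shows "y1fun \<omega> f t = Y1 t"
proof -
  have "y1fun \<omega> f t = exp (-(w * t)) * (LINT s:{0..t}|lborel. exp (w * s) * f s)"
    unfolding y1fun_def
    by (subst set_integral_mult_right[symmetric], rule set_lebesgue_integral_cong)
       (auto simp: exp_add[symmetric] algebra_simps)
  also have "(LINT s:{0..t}|lborel. exp (w * s) * f s) = exp (w * t) * (LINT s:{0..t}|lborel. f s)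
     - (LINT r:{0..t}|lborel. w * exp (w * r) * (LINT s:{0..r}|lborel. f s))"
    by (rule set_integral_exp_mult_by_parts[OF f_loc[OF t] w_pos])
  also have "(LINT r:{0..t}|lborel. w * exp (w * r) * (LINT s:{0..r}|lborel. f s))
      = (LINT r:{0..t}|lborel. w * (exp (w * r) * F r))"
    by (rule set_lebesgue_integral_cong) (auto simp: F_eq_set_integral)
  also have "\<dots> = w * integral {0..t} (\<lambda>r. exp (w * r) * F r)"
    by (simp add: continuous_atLeast_set_integral_eq continuous_intros F_cont)
  finally show ?thesis
    using F_eq_set_integral[OF t] by (simp add: Y1_def N_def algebra_simps exp_minus field_simps)
qed

lemma y2fun_eq:
  assumes t: "0 \<le> t"
  shows "y2fun \<omega> f t = Y2 t"
proof -
  have "y2fun \<omega> f t = exp (-(w * t)) * (LINT s:{0..t}|lborel. exp (w * s) * Y1 s)"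
    unfolding y2fun_def
    by (subst set_integral_mult_right[symmetric], rule set_lebesgue_integral_cong)
       (auto simp: exp_add[symmetric] algebra_simps y1fun_eq)
  also have "(LINT s:{0..t}|lborel. exp (w * s) * Y1 s) = integral {0..t} (\<lambda>s. exp (w * s) * Y1 s)"
    by (simp add: continuous_atLeast_set_integral_eq continuous_intros Y1_cont)
  finally show ?thesis by (simp add: Y2_def)
qed

text \<open>Since \<open>y\<^sub>2\<close> solves \<open>(D + w)\<^sup>2 y\<^sub>2 = f\<close>, the combination \<open>W\<close> is chosen so that
  \<open>f\<close>, \<open>x'\<close> and \<open>N\<close> cancel in its derivative.\<close>

definition W :: "(real \<Rightarrow> real) \<Rightarrow> (real \<Rightarrow> real) \<Rightarrow> real \<Rightarrow> real" where
  "W \<phi> \<phi>' t = \<phi> t * (w * N t - J t) + (\<phi> t * p t - \<phi>' t) * x t + (\<phi>' t - w * \<phi> t) * Y2 t"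

lemma W_cont:
  assumes "continuous_on {0..} \<phi>" "continuous_on {0..} \<phi>'"
  shows "continuous_on {0..} (W \<phi> \<phi>')"
  unfolding W_def[abs_def] by (intro continuous_intros assms N_cont J_cont p_cont x_cont Y2_cont)

lemma W_eq_integral:
  fixes \<phi> \<phi>' \<phi>'' :: "real \<Rightarrow> real"
  assumes T: "0 \<le> T"
    and \<phi>: "\<And>s. s \<in> {0..T} \<Longrightarrow> (\<phi> has_real_derivative \<phi>' s) (at s within {0..T})"
    and \<phi>': "\<And>s. s \<in> {0..T} \<Longrightarrow> (\<phi>' has_real_derivative \<phi>'' s) (at s within {0..T})"
  shows "W \<phi> \<phi>' T = integral {0..T} (\<lambda>s. (\<phi>'' s - 2 * w * \<phi>' s + w\<^sup>2 * \<phi> s) * Y2 s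
           + (\<phi>' s * p s + \<phi> s * p' s - w * \<phi> s - \<phi>'' s) * x s)"
proof -
  have "((\<lambda>s. (\<phi>'' s - 2 * w * \<phi>' s + w\<^sup>2 * \<phi> s) * Y2 s + (\<phi>' s * p s + \<phi> s * p' s - w * \<phi> s - \<phi>'' s) * x s)
        has_integral (W \<phi> \<phi>' T - W \<phi> \<phi>' 0)) {0..T}"
  proof (rule fundamental_theorem_of_calculus[OF T],
      unfold has_real_derivative_iff_has_vector_derivative[symmetric])
    fix s assume s: "s \<in> {0..T}"
    then have "0 \<le> s" "s \<le> T" by auto
    note derivs = \<phi>[OF s] \<phi>'[OF s] N_deriv[OF this] J_deriv[OF this] Y2_deriv[OF this]
      p_deriv_within[OF order_refl s] x_deriv_within[OF order_refl s]
    show "(W \<phi> \<phi>' has_real_derivative (\<phi>'' s - 2 * w * \<phi>' s + w\<^sup>2 * \<phi> s) * Y2 s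
        + (\<phi>' s * p s + \<phi> s * p' s - w * \<phi> s - \<phi>'' s) * x s) (at s within {0..T})"
      unfolding W_def[abs_def]
      by (rule derivative_eq_intros derivs refl)+
         (simp add: Y1_def F_def algebra_simps power2_eq_square)
  qed
  moreover have "W \<phi> \<phi>' 0 = 0"
    by (simp add: W_def N_def J_def x0 Y2_def)
  ultimately show ?thesis by (simp add: integral_unique)
qed

section \<open>Functions of order o(A)\<close>

lemma smallo_AI:
  assumes "\<And>e. e > 0 \<Longrightarrow> \<exists>T. \<forall>t\<ge>T. \<bar>R t\<bar> \<le> e * A t"
  shows "R \<in> o[at_top](A)"
proof (rule landau_o.smallI)
  fix e :: real assume "e > 0"
  with assms obtain T where "\<forall>t\<ge>T. \<bar>R t\<bar> \<le> e * A t" by blast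
  then show "eventually (\<lambda>t. norm (R t) \<le> e * norm (A t)) at_top"
    unfolding eventually_at_top_linorder using A_pos by (auto simp: abs_of_pos)
qed

lemma smallo_AD:
  assumes "R \<in> o[at_top](A)" "e > 0"
  shows "\<exists>T\<ge>0. \<forall>t\<ge>T. \<bar>R t\<bar> \<le> e * A t"
proof -
  from landau_o.smallD[OF assms] obtain T where "\<forall>t\<ge>T. \<bar>R t\<bar> \<le> e * \<bar>A t\<bar>"
    by (auto simp: eventually_at_top_linorder)
  then show ?thesis
    using A_pos by (intro exI[of _ "max T 0"]) (auto simp: abs_of_pos)
qed

lemma const_in_smallo_A: "(\<lambda>_. c) \<in> o[at_top](A)"
proof -
  have "(\<lambda>_. 1) \<in> o[at_top](A)"
    using filterlim_at_top_imp_at_infinity[OF filterlim_A_at_top]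
    by (simp add: smallomega_iff_smallo[symmetric] smallomega_1_conv_filterlim)
  then show ?thesis
    using landau_o.small.cmult_in_iff[of c "\<lambda>_. 1" at_top A] by (cases "c = 0") auto
qed

lemma smallo_A_shift:
  assumes R: "R \<in> o[at_top](A)" and \<tau>: "0 \<le> \<tau>"
  shows "(\<lambda>t. R (t + \<tau>)) \<in> o[at_top](A)"
proof -
  have "filterlim (\<lambda>t. t + \<tau>) at_top at_top" by real_asymp
  then have "(\<lambda>t. R (t + \<tau>)) \<in> o[at_top](\<lambda>t. A (t + \<tau>))"
    by (rule landau_o.small.compose[OF R])
  moreover have "(\<lambda>t. A (t + \<tau>)) \<in> O[at_top](A)"
  proof (rule bigoI)
    show "eventually (\<lambda>t. norm (A (t + \<tau>)) \<le> exp (p 0 * \<tau> / 2) * norm (A t)) at_top"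
      using eventually_ge_at_top[of 0]
    proof eventually_elim
      case (elim t)
      then show ?case using A_shift_le[of t "t + \<tau>"] \<tau> A_pos by (simp add: abs_of_pos)
    qed
  qed
  ultimately show ?thesis by (rule landau_o.small_big_trans)
qed

lemma smallo_A_uniform:
  assumes B: "continuous_on {0..} B" "B \<in> o[at_top](A)" and e: "e > 0"
  shows "\<exists>T. \<forall>t\<ge>T. \<forall>s\<in>{0..t}. \<bar>B s\<bar> \<le> e * A t"
proof -
  obtain T1 where T1: "T1 \<ge> 0" "\<forall>s\<ge>T1. \<bar>B s\<bar> \<le> e * A s"
    using smallo_AD[OF B(2) e] by blast
  obtain m where m: "\<forall>s\<in>{0..T1}. \<bar>B s\<bar> \<le> m"
  proof -
    have "continuous_on {0..T1} (\<lambda>s. \<bar>B s\<bar>)"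
      by (intro continuous_intros continuous_on_subset[OF B(1)]) auto
    then show ?thesis using continuous_attains_sup[of "{0..T1}" "\<lambda>s. \<bar>B s\<bar>"] T1(1) that by auto
  qed
  obtain T2 where T2: "\<forall>t\<ge>T2. \<bar>m\<bar> \<le> e * A t"
    using smallo_AD[OF const_in_smallo_A e] by auto
  have "\<bar>B s\<bar> \<le> e * A t" if t: "t \<ge> max T1 T2" and s: "s \<in> {0..t}" for s t
  proof (cases "s \<le> T1")
    case True
    then show ?thesis using m s T2 t by force
  next
    case False
    then have "\<bar>B s\<bar> \<le> e * A s" using T1 by simp
    also have "\<dots> \<le> e * A t" using A_mono[of s t] s e by simp
    finally show ?thesis .
  qed
  then show ?thesis by blast
qed

lemma gronwall_smallo_A:
  fixes u B k :: "real \<Rightarrow> real"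
  assumes u: "continuous_on {0..} u" "\<And>t. t \<ge> 0 \<Longrightarrow> u t \<ge> 0"
    and B: "continuous_on {0..} B" "B \<in> o[at_top](A)"
    and k: "continuous_on {0..} k" "\<And>s. s \<ge> 0 \<Longrightarrow> k s \<ge> 0"
    and Ta: "0 \<le> Ta" "\<And>t. Ta \<le> t \<Longrightarrow> integral {Ta..t} k \<le> 1/2"
    and ineq: "\<And>t. t \<ge> 0 \<Longrightarrow> u t \<le> B t + integral {0..t} (\<lambda>s. k s * u s)"
  shows "u \<in> o[at_top](A)"
proof (rule smallo_AI)
  fix e :: real assume e: "e > 0"
  define C where "C = integral {0..Ta} (\<lambda>s. k s * u s)"
  obtain T1 where T1: "\<forall>t\<ge>T1. \<forall>s\<in>{0..t}. \<bar>B s\<bar> \<le> (e/4) * A t"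
    using smallo_A_uniform[OF B, of "e/4"] e by auto
  obtain T2 where T2: "\<forall>t\<ge>T2. \<bar>C\<bar> \<le> (e/4) * A t"
    using smallo_AD[OF const_in_smallo_A, of "e/4"] e by auto
  have "\<bar>u t\<bar> \<le> e * A t" if t: "t \<ge> max Ta (max T1 T2)" for t
  proof -
    obtain s where s: "s \<in> {Ta..t}" "u t \<le> 2 * (B s + C)"
      using integral_inequality_max_bound[OF u k Ta ineq, of t] t unfolding C_def by auto
    then have "\<bar>B s\<bar> \<le> (e/4) * A t" "\<bar>C\<bar> \<le> (e/4) * A t"
      using T1 T2 t Ta(1) by auto
    then show ?thesis using s u(2)[of t] t Ta(1) by auto
  qed
  then show "\<exists>T. \<forall>t\<ge>T. \<bar>u t\<bar> \<le> e * A t" by blast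
qed

definition Aint :: "(real \<Rightarrow> real) \<Rightarrow> (real \<Rightarrow> real) \<Rightarrow> real \<Rightarrow> real" where
  "Aint k z t = integral {0..t} (\<lambda>s. k s * A s * z s)"

lemma Aint_cont:
  "continuous_on {0..} k \<Longrightarrow> continuous_on {0..} z \<Longrightarrow> continuous_on {0..} (Aint k z)"
  unfolding Aint_def[abs_def] by (intro continuous_atLeast_integral_continuous continuous_intros A_cont)

lemma Aint_cmult: "Aint (\<lambda>s. c * k s) z t = c * Aint k z t"
  by (simp add: Aint_def mult.assoc)

lemma integral_A_p_minus_p'_le:
  assumes "0 \<le> a" "a \<le> t"
  shows "integral {a..t} (\<lambda>s. A s * p s + - (A s * p' s)) \<le> (2 + p 0) * A t"
proof -
  have "(\<lambda>s. A s * p s) integrable_on {a..t}" "(\<lambda>s. - (A s * p' s)) integrable_on {a..t}"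
    using assms by (auto intro!: continuous_atLeast_integrable_on continuous_intros A_cont p_cont p'_cont)
  then have "integral {a..t} (\<lambda>s. A s * p s + - (A s * p' s))
      = integral {a..t} (\<lambda>s. A s * p s) + integral {a..t} (\<lambda>s. - (A s * p' s))"
    by (rule Henstock_Kurzweil_Integration.integral_add)
  also have "\<dots> \<le> 2 * A t + p 0 * A t"
    using integral_A_p[OF assms] integral_A_neg_p'_le[OF assms] A_pos[of a] by simp
  finally show ?thesis by (simp add: algebra_simps)
qed

lemma Aint_in_smallo_A:
  assumes k: "continuous_on {0..} k" "\<And>s. s \<ge> 0 \<Longrightarrow> \<bar>k s\<bar> \<le> C * (p s - p' s)"
    and z: "continuous_on {0..} z" "(z \<longlongrightarrow> 0) at_top"
  shows "Aint k z \<in> o[at_top](A)"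
  unfolding Aint_def[abs_def]
proof (rule integral_weighted_null_in_smallo[where k="\<lambda>s. k s * A s"
      and \<rho>="\<lambda>s. C * (A s * p s + - (A s * p' s))" and M="C * (2 + p 0)"])
  have "0 \<le> C * (p 0 - p' 0)" using k(2)[of 0] abs_ge_zero[of "k 0"] by linarith
  then have C: "C \<ge> 0" using p_pos[of 0] p'_neg[of 0] by (auto simp: zero_le_mult_iff)
  show "\<bar>k s * A s\<bar> \<le> C * (A s * p s + - (A s * p' s))" if "s \<ge> 0" for s
    using mult_right_mono[OF k(2)[OF that] less_imp_le[OF A_pos[of s]]]
    by (simp add: abs_mult abs_of_pos[OF A_pos] algebra_simps)
  show "integral {a..t} (\<lambda>s. C * (A s * p s + - (A s * p' s))) \<le> C * (2 + p 0) * A t"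
    if "0 \<le> a" "a \<le> t" for a t
    using mult_left_mono[OF integral_A_p_minus_p'_le[OF that] C] by (simp add: mult.assoc)
qed (use k z in \<open>auto intro!: continuous_intros A_cont p_cont p'_cont const_in_smallo_A\<close>)

lemma Aint_increment_in_smallo_A:
  assumes g: "continuous_on {0..} g" "\<And>s. \<bar>g s\<bar> \<le> 1"
    and z: "continuous_on {0..} z" "(z \<longlongrightarrow> 0) at_top" and \<tau>: "0 \<le> \<tau>"
  shows "(\<lambda>t. Aint g z (t + \<tau>) - Aint g z t) \<in> o[at_top](A)"
proof (rule smallo_AI)
  fix e :: real assume e: "e > 0"
  define K where "K = exp (p 0 * \<tau> / 2)"
  define d where "d = e / (\<tau> * K + 1)"
  have den: "\<tau> * K + 1 > 0" using \<tau> by (simp add: K_def add_nonneg_pos)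
  have d: "d > 0" "\<tau> * K * d \<le> e"
    using e den by (simp_all add: d_def field_simps)
  obtain T where T: "T \<ge> 0" "\<forall>s\<ge>T. \<bar>z s\<bar> \<le> d"
    using tendsto_zero_eventually_abs_le[OF z(2) d(1)] by auto
  have gAz: "continuous_on {0..} (\<lambda>s. g s * A s * z s)" by (intro continuous_intros g A_cont z)
  have "\<bar>Aint g z (t + \<tau>) - Aint g z t\<bar> \<le> e * A t" if t: "t \<ge> T" for t
  proof -
    have "Aint g z (t + \<tau>) - Aint g z t = integral {t..t+\<tau>} (\<lambda>s. g s * A s * z s)"
      using continuous_atLeast_integral_combine[OF gAz, of t "t+\<tau>"] T t \<tau> by (simp add: Aint_def)
    also have "norm \<dots> \<le> integral {t..t+\<tau>} (\<lambda>s. A (t+\<tau>) * d)"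
    proof (rule integral_norm_bound_integral)
      show "(\<lambda>s. g s * A s * z s) integrable_on {t..t+\<tau>}"
        using T t by (intro continuous_atLeast_integrable_on gAz) auto
      show "(\<lambda>s. A (t+\<tau>) * d) integrable_on {t..t+\<tau>}"
        by (intro integrable_continuous_interval continuous_intros)
      show "norm (g s * A s * z s) \<le> A (t+\<tau>) * d" if s: "s \<in> {t..t+\<tau>}" for s
      proof -
        have "\<bar>g s\<bar> * A s * \<bar>z s\<bar> \<le> 1 * A (t + \<tau>) * d"
          using g(2)[of s] A_mono[of s "t+\<tau>"] T t s A_pos[of s] d(1) by (intro mult_mono) auto
        then show ?thesis using A_pos[of s] by (simp add: abs_mult)
      qed
    qed
    also have "\<dots> = \<tau> * (A (t+\<tau>) * d)" using \<tau> by simp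
    also have "\<dots> \<le> \<tau> * ((K * A t) * d)"
      using A_shift_le[of t "t+\<tau>"] T t \<tau> d(1) unfolding K_def by (intro mult_left_mono mult_right_mono) auto
    also have "\<dots> = (\<tau> * K * d) * A t" by simp
    also have "\<dots> \<le> e * A t"
      using d(2) A_pos[of t] by (intro mult_right_mono) auto
    finally show ?thesis by simp
  qed
  then show "\<exists>T. \<forall>t\<ge>T. \<bar>Aint g z (t + \<tau>) - Aint g z t\<bar> \<le> e * A t" by blast
qed

section \<open>Oscillating test functions\<close>

text \<open>The Liouville substitution \<open>z = A x\<close> turns the equation into \<open>z'' + (w - q) z = A f\<close>.\<close>

definition q :: "real \<Rightarrow> real" where
  "q s = (p s)\<^sup>2 / 4 + p' s / 2"

lemma q_cont: "continuous_on {0..} q"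
  unfolding q_def[abs_def] by (intro continuous_intros p_cont p'_cont) auto

lemma abs_q_le: "s \<ge> 0 \<Longrightarrow> \<bar>q s\<bar> \<le> (p s)\<^sup>2 / 4 + (- p' s) / 2"
  using p'_neg[of s] unfolding q_def by (simp add: abs_le_iff)

lemma abs_q_le_p_minus_p':
  assumes s: "s \<ge> 0"
  shows "\<bar>q s\<bar> \<le> (p 0 / 4 + 1 / 2) * (p s - p' s)"
proof -
  have "(p s)\<^sup>2 \<le> p 0 * p s"
    using p_pos[OF s] p_le_p_0[OF s] by (simp add: power2_eq_square mult_right_mono)
  moreover have "0 \<le> p 0 * (- p' s)"
    using p_pos[of 0] p'_neg[OF s] by (intro mult_nonneg_nonneg) auto
  moreover have "(p 0 / 4 + 1 / 2) * (p s - p' s) = p 0 * p s / 4 + p 0 * (- p' s) / 4 + p s / 2 + (- p' s) / 2"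
    by (simp add: field_simps)
  ultimately show ?thesis
    using abs_q_le[OF s] p_pos[OF s] by linarith
qed

definition osc_rem :: "(real \<Rightarrow> real) \<Rightarrow> (real \<Rightarrow> real) \<Rightarrow> real \<Rightarrow> real" where
  "osc_rem g g' s = p s * g' s + q s * g s - w * p s * g s"

lemma osc_rem_cont:
  "continuous_on {0..} g \<Longrightarrow> continuous_on {0..} g' \<Longrightarrow> continuous_on {0..} (osc_rem g g')"
  unfolding osc_rem_def[abs_def] by (intro continuous_intros p_cont q_cont)

lemma abs_osc_rem_le:
  assumes g: "\<And>s. \<bar>g s\<bar> \<le> 1" and g': "\<And>s. \<bar>g' s\<bar> \<le> \<omega>" and s: "s \<ge> 0"
  shows "\<bar>osc_rem g g' s\<bar> \<le> (\<omega> + w + p 0 / 4 + 1 / 2) * (p s - p' s)"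
proof -
  have p: "0 < p s" "p' s < 0" using p_pos[OF s] p'_neg[OF s] by auto
  have "\<bar>osc_rem g g' s\<bar> \<le> \<bar>p s * g' s\<bar> + \<bar>q s * g s\<bar> + \<bar>w * p s * g s\<bar>"
    unfolding osc_rem_def by linarith
  also have "\<dots> = p s * \<bar>g' s\<bar> + \<bar>q s\<bar> * \<bar>g s\<bar> + w * p s * \<bar>g s\<bar>"
    using p by (simp add: abs_mult)
  also have "\<dots> \<le> p s * \<omega> + \<bar>q s\<bar> * 1 + w * p s * 1"
    using g[of s] g'[of s] p w_pos by (intro add_mono mult_left_mono) auto
  also have "\<dots> \<le> \<omega> * (p s - p' s) + (p 0 / 4 + 1 / 2) * (p s - p' s) + w * (p s - p' s)"
    using abs_q_le_p_minus_p'[OF s] p \<omega>_pos w_pos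
      mult_nonneg_nonpos[of \<omega> "p' s"] mult_nonpos_nonneg[of "p' s" w]
    by (intro add_mono) (auto simp: algebra_simps)
  finally show ?thesis by (simp add: algebra_simps)
qed

definition Wosc :: "(real \<Rightarrow> real) \<Rightarrow> (real \<Rightarrow> real) \<Rightarrow> real \<Rightarrow> real" where
  "Wosc g g' = W (\<lambda>s. A s * g s) (\<lambda>s. A s * (g' s + p s * g s / 2))"

lemma Wosc_cont:
  "continuous_on {0..} g \<Longrightarrow> continuous_on {0..} g' \<Longrightarrow> continuous_on {0..} (Wosc g g')"
  unfolding Wosc_def by (intro W_cont continuous_intros A_cont p_cont) auto

lemma Wosc_eq_Aint:
  assumes g: "\<And>s. (g has_real_derivative g' s) (at s)"
    and g': "\<And>s. (g' has_real_derivative - (w * g s)) (at s)" and t: "0 \<le> t"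
  shows "Wosc g g' t = (w\<^sup>2 - w) * Aint g Y2 t - 2 * w * Aint g' Y2 t
    + Aint (osc_rem g g') Y2 t + Aint (\<lambda>s. g s * q s) x t"
proof -
  have gc: "continuous_on {0..} g" "continuous_on {0..} g'"
    using g g' by (auto intro!: continuous_at_imp_continuous_on DERIV_isCont)
  have d0: "((\<lambda>s. A s * g s) has_real_derivative A s * (g' s + p s * g s / 2)) (at s within {0..t})"
    if "s \<in> {0..t}" for s
    using that by (auto intro!: derivative_eq_intros A_deriv has_field_derivative_at_within[OF g]
        simp: algebra_simps)
  have d1: "((\<lambda>s. A s * (g' s + p s * g s / 2)) has_real_derivative
      A s * (- (w * g s) + p s * g' s + q s * g s)) (at s within {0..t})" if "s \<in> {0..t}" for s
    using that
    by (auto intro!: derivative_eq_intros A_deriv p_deriv_within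
        has_field_derivative_at_within[OF g] has_field_derivative_at_within[OF g']
        simp: q_def field_simps power2_eq_square)
  have "((\<lambda>s. (w\<^sup>2 - w) * (g s * A s * Y2 s) - 2 * w * (g' s * A s * Y2 s)
      + osc_rem g g' s * A s * Y2 s + g s * q s * A s * x s)
    has_integral (w\<^sup>2 - w) * Aint g Y2 t - 2 * w * Aint g' Y2 t
      + Aint (osc_rem g g') Y2 t + Aint (\<lambda>s. g s * q s) x t) {0..t}"
    unfolding Aint_def using t
    by (intro has_integral_add has_integral_diff has_integral_mult_right integrable_integral
        continuous_atLeast_integrable_on continuous_intros gc osc_rem_cont A_cont Y2_cont x_cont q_cont)
       auto
  moreover have "Wosc g g' t = integral {0..t} (\<lambda>s. (w\<^sup>2 - w) * (g s * A s * Y2 s) - 2 * w * (g' s * A s * Y2 s)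
      + osc_rem g g' s * A s * Y2 s + g s * q s * A s * x s)"
    unfolding Wosc_def
    by (subst W_eq_integral[OF t d0 d1])
       (auto intro!: integral_cong simp: osc_rem_def q_def algebra_simps power2_eq_square)
  ultimately show ?thesis by (simp add: integral_unique)
qed

abbreviation Wc where "Wc \<equiv> Wosc (\<lambda>s. cos (\<omega> * s)) (\<lambda>s. - (\<omega> * sin (\<omega> * s)))"
abbreviation Ws where "Ws \<equiv> Wosc (\<lambda>s. sin (\<omega> * s)) (\<lambda>s. \<omega> * cos (\<omega> * s))"
abbreviation Kc where "Kc \<equiv> Aint (\<lambda>s. cos (\<omega> * s)) Y2"
abbreviation Ks where "Ks \<equiv> Aint (\<lambda>s. sin (\<omega> * s)) Y2"
abbreviation Rc where "Rc \<equiv> Aint (osc_rem (\<lambda>s. cos (\<omega> * s)) (\<lambda>s. - (\<omega> * sin (\<omega> * s)))) Y2"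
abbreviation Rs where "Rs \<equiv> Aint (osc_rem (\<lambda>s. sin (\<omega> * s)) (\<lambda>s. \<omega> * cos (\<omega> * s))) Y2"
abbreviation Qc where "Qc \<equiv> Aint (\<lambda>s. cos (\<omega> * s) * q s) x"
abbreviation Qs where "Qs \<equiv> Aint (\<lambda>s. sin (\<omega> * s) * q s) x"

lemma Wc_eq: "0 \<le> t \<Longrightarrow> Wc t = (w\<^sup>2 - w) * Kc t + 2 * w * \<omega> * Ks t + Rc t + Qc t"
proof -
  assume t: "0 \<le> t"
  have "Aint (\<lambda>s. - (\<omega> * sin (\<omega> * s))) Y2 t = - \<omega> * Ks t"
    using Aint_cmult[of "- \<omega>" "\<lambda>s. sin (\<omega> * s)" Y2 t] by simp
  moreover have "Wc t = (w\<^sup>2 - w) * Kc t - 2 * w * Aint (\<lambda>s. - (\<omega> * sin (\<omega> * s))) Y2 t + Rc t + Qc t"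
    by (rule Wosc_eq_Aint[OF _ _ t]) (auto intro!: derivative_eq_intros simp: power2_eq_square)
  ultimately show ?thesis by simp
qed

lemma Ws_eq: "0 \<le> t \<Longrightarrow> Ws t = (w\<^sup>2 - w) * Ks t - 2 * w * \<omega> * Kc t + Rs t + Qs t"
proof -
  assume t: "0 \<le> t"
  have "Ws t = (w\<^sup>2 - w) * Ks t - 2 * w * Aint (\<lambda>s. \<omega> * cos (\<omega> * s)) Y2 t + Rs t + Qs t"
    by (rule Wosc_eq_Aint[OF _ _ t]) (auto intro!: derivative_eq_intros simp: power2_eq_square)
  then show ?thesis by (simp add: Aint_cmult)
qed

lemma sin_Wc_minus_cos_Ws: "sin (\<omega> * t) * Wc t - cos (\<omega> * t) * Ws t = \<omega> * A t * (x t - Y2 t)"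
proof -
  have "sin (\<omega> * t) * Wc t - cos (\<omega> * t) * Ws t
      = \<omega> * A t * (x t - Y2 t) * ((sin (\<omega> * t))\<^sup>2 + (cos (\<omega> * t))\<^sup>2)"
    unfolding Wosc_def W_def
    by (simp add: algebra_simps power2_eq_square del: sin_cos_squared_add sin_cos_squared_add2 sin_cos_squared_add3)
  then show ?thesis by simp
qed

section \<open>Necessity of the conditions\<close>

definition kernel :: "real \<Rightarrow> real \<Rightarrow> real" where
  "kernel t s = (w * (t - s) - 1) * p s + (t - s) * p' s - (w + w\<^sup>2) * (t - s) + 2 * w"

text \<open>The test function \<open>(t - s) e\<^bsup>w s\<^esup>\<close> is annihilated by \<open>(D - w)\<^sup>2\<close>, so no \<open>y\<^sub>2\<close>-term survives.\<close>

lemma x_minus_Y2_eq_integral: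
  assumes t: "0 \<le> t"
  shows "x t - Y2 t = integral {0..t} (\<lambda>s. exp (-(w * (t - s))) * kernel t s * x s)"
proof -
  have \<phi>: "((\<lambda>s. (t - s) * exp (w * s)) has_real_derivative (w * (t - s) - 1) * exp (w * s))
      (at s within {0..t})" for s
    by (auto intro!: derivative_eq_intros simp: algebra_simps)
  have \<phi>': "((\<lambda>s. (w * (t - s) - 1) * exp (w * s)) has_real_derivative (w\<^sup>2 * (t - s) - 2 * w) * exp (w * s))
      (at s within {0..t})" for s
    by (auto intro!: derivative_eq_intros simp: algebra_simps power2_eq_square)
  have "exp (w * t) * (x t - Y2 t) = W (\<lambda>s. (t - s) * exp (w * s)) (\<lambda>s. (w * (t - s) - 1) * exp (w * s)) t"
    by (simp add: W_def algebra_simps)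
  also have "\<dots> = integral {0..t} (\<lambda>s. exp (w * s) * kernel t s * x s)"
    by (subst W_eq_integral[OF t \<phi> \<phi>'])
       (auto intro!: integral_cong simp: kernel_def algebra_simps power2_eq_square)
  also have "\<dots> = integral {0..t} (\<lambda>s. exp (w * t) * (exp (-(w * (t - s))) * kernel t s * x s))"
  proof (rule integral_cong)
    fix s
    have "exp (w * s) = exp (w * t) * exp (-(w * (t - s)))"
      by (simp add: exp_add[symmetric] algebra_simps)
    then show "exp (w * s) * kernel t s * x s = exp (w * t) * (exp (-(w * (t - s))) * kernel t s * x s)"
      by (simp add: mult.assoc)
  qed
  also have "\<dots> = exp (w * t) * integral {0..t} (\<lambda>s. exp (-(w * (t - s))) * kernel t s * x s)"
    by simp
  finally show ?thesis by simp
qed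

lemma abs_kernel_le:
  assumes s: "0 \<le> s" "s \<le> t"
  shows "\<bar>kernel t s\<bar> \<le> (w * p 0 + w + w\<^sup>2 + p 0 + 2 * w + 1) * ((1 + (t - s)) * (1 - p' s))"
proof -
  define u where "u = t - s"
  define K where "K = w * p 0 + w + w\<^sup>2 + p 0 + 2 * w + 1"
  have u: "u \<ge> 0" using s by (simp add: u_def)
  have p: "0 < p s" "p s \<le> p 0" "p' s < 0" using p_pos[OF s(1)] p_le_p_0[OF s(1)] p'_neg[OF s(1)] by auto
  have K: "K \<ge> 1" "w * p 0 + w + w\<^sup>2 \<le> K" "p 0 + 2 * w \<le> K"
    using w_pos p_pos[of 0] by (auto simp: K_def)
  have "\<bar>kernel t s\<bar> \<le> \<bar>(w * u - 1) * p s\<bar> + \<bar>u * p' s\<bar> + \<bar>(w + w\<^sup>2) * u\<bar> + \<bar>2 * w\<bar>"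
    unfolding kernel_def u_def[symmetric] by linarith
  also have "\<dots> \<le> (w * u + 1) * p 0 + u * (- p' s) + (w + w\<^sup>2) * u + 2 * w"
  proof -
    have "0 \<le> w * u" using w_pos u by simp
    then have "\<bar>w * u - 1\<bar> \<le> w * u + 1" by (simp add: abs_le_iff)
    then have "\<bar>(w * u - 1) * p s\<bar> \<le> (w * u + 1) * p 0"
      using mult_mono[OF _ p(2)] p(1) \<open>0 \<le> w * u\<close> by (simp add: abs_mult)
    then show ?thesis using p u w_pos by (simp add: abs_mult)
  qed
  also have "\<dots> = (w * p 0 + w + w\<^sup>2) * u + (p 0 + 2 * w) + 1 * (u * (- p' s))"
    by (simp add: algebra_simps)
  also have "\<dots> \<le> K * u + K + K * (u * (- p' s)) + K * (- p' s)"
  proof -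
    have "(w * p 0 + w + w\<^sup>2) * u \<le> K * u" using K(2) u by (rule mult_right_mono)
    moreover have "1 * (u * (- p' s)) \<le> K * (u * (- p' s))"
      using K(1) u p mult_nonneg_nonneg[of u "- p' s"] by (intro mult_right_mono) auto
    moreover have "0 \<le> K * (- p' s)" using K(1) p by (intro mult_nonneg_nonneg) auto
    ultimately show ?thesis using K(3) by linarith
  qed
  also have "\<dots> = K * ((1 + u) * (1 - p' s))"
    by (simp add: algebra_simps)
  finally show ?thesis by (simp add: K_def u_def)
qed

lemma integral_exp_kernel_one_minus_p'_le:
  assumes c: "c > 0" and a: "0 \<le> a" "a \<le> t"
  shows "integral {a..t} (\<lambda>s. exp (-(c * (t - s))) * (1 - p' s)) \<le> 1 / c + p 0"
proof -
  have int: "(\<lambda>s. exp (-(c * (t - s)))) integrable_on {a..t}" "(\<lambda>s. - p' s) integrable_on {a..t}"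
    using a by (auto intro!: continuous_atLeast_integrable_on continuous_intros p'_cont)
  have "integral {a..t} (\<lambda>s. exp (-(c * (t - s))) * (1 - p' s))
      \<le> integral {a..t} (\<lambda>s. exp (-(c * (t - s))) + - p' s)"
  proof (rule integral_le)
    show "(\<lambda>s. exp (-(c * (t - s))) * (1 - p' s)) integrable_on {a..t}"
      using a by (auto intro!: continuous_atLeast_integrable_on continuous_intros p'_cont)
    show "(\<lambda>s. exp (-(c * (t - s))) + - p' s) integrable_on {a..t}"
      using int by (rule integrable_add)
    show "exp (-(c * (t - s))) * (1 - p' s) \<le> exp (-(c * (t - s))) + - p' s" if "s \<in> {a..t}" for s
      using that a c p'_neg[of s] mult_left_le_one_le[of "- p' s" "exp (-(c * (t - s)))"]
      by (simp add: algebra_simps)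
  qed
  also have "\<dots> = integral {a..t} (\<lambda>s. exp (-(c * (t - s)))) + integral {a..t} (\<lambda>s. - p' s)"
    using int by (rule Henstock_Kurzweil_Integration.integral_add)
  also have "\<dots> \<le> 1 / c + p 0"
  proof (rule add_mono)
    show "integral {a..t} (\<lambda>s. exp (-(c * (t - s)))) \<le> 1 / c"
      by (rule integral_exp_kernel_le[OF c a(2)])
    have "integral {a..t} (\<lambda>s. - p' s) = p a - p t"
      using integral_unique[OF has_integral_neg[OF p'_has_integral[OF a]]] by simp
    then show "integral {a..t} (\<lambda>s. - p' s) \<le> p 0"
      using p_le_p_0[OF a(1)] p_pos[of t] a by simp
  qed
  finally show ?thesis .
qed

lemma exp_abs_kernel_le:
  obtains K where "\<And>t s. 0 \<le> s \<Longrightarrow> s \<le> t \<Longrightarrow>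
    exp (-(w * (t - s))) * \<bar>kernel t s\<bar> \<le> K * (exp (-((w / 2) * (t - s))) * (1 - p' s))"
proof
  define C where "C = w * p 0 + w + w\<^sup>2 + p 0 + 2 * w + 1"
  fix t s :: real assume s: "0 \<le> s" "s \<le> t"
  have "exp (-(w * (t - s))) * \<bar>kernel t s\<bar> \<le> exp (-(w * (t - s))) * (C * ((1 + (t - s)) * (1 - p' s)))"
    using abs_kernel_le[OF s] by (simp add: C_def)
  also have "\<dots> = C * (1 - p' s) * (exp (-(w * (t - s))) * (1 + (t - s)))"
    by (simp add: algebra_simps)
  also have "\<dots> \<le> C * (1 - p' s) * ((1 + 2 / w) * exp (-((w / 2) * (t - s))))"
    using exp_mult_one_plus_le[OF w_pos, of "t - s"] s p'_neg[of s] w_pos p_pos[of 0]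
    by (intro mult_left_mono) (auto simp: C_def add_nonneg_nonneg)
  also have "\<dots> = (C * (1 + 2 / w)) * (exp (-((w / 2) * (t - s))) * (1 - p' s))"
    by (simp only: mult_ac)
  finally show "exp (-(w * (t - s))) * \<bar>kernel t s\<bar> \<le> (C * (1 + 2 / w)) * (exp (-((w / 2) * (t - s))) * (1 - p' s))" .
qed

lemma Y2_tendsto_zero:
  assumes x: "(x \<longlongrightarrow> 0) at_top"
  shows "(Y2 \<longlongrightarrow> 0) at_top"
proof -
  obtain K where K: "\<And>t s. 0 \<le> s \<Longrightarrow> s \<le> t \<Longrightarrow>
      exp (-(w * (t - s))) * \<bar>kernel t s\<bar> \<le> K * (exp (-((w / 2) * (t - s))) * (1 - p' s))"
    using exp_abs_kernel_le by blast
  define I where "I t = integral {0..t} (\<lambda>s. exp (-((w / 2) * (t - s))) * (1 - p' s) * \<bar>x s\<bar>)" for t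
  have nonneg: "1 - p' s \<ge> 0" if "s \<ge> 0" for s
    using p'_neg[OF that] by simp
  have "(I \<longlongrightarrow> 0) at_top"
    unfolding I_def[abs_def]
    by (rule exp_convolution_tendsto_zero[where M="2 / w + p 0"])
       (use w_pos x x_cont nonneg integral_exp_kernel_one_minus_p'_le[of "w / 2"] in
         \<open>auto intro!: continuous_intros p'_cont\<close>)
  then have lim: "((\<lambda>t. K * I t) \<longlongrightarrow> 0) at_top"
    using tendsto_mult_right_zero by blast
  have "norm (x t - Y2 t) \<le> K * I t" if t: "t \<ge> 0" for t
  proof -
    have "norm (integral {0..t} (\<lambda>s. exp (-(w * (t - s))) * kernel t s * x s))
       \<le> integral {0..t} (\<lambda>s. K * (exp (-((w / 2) * (t - s))) * (1 - p' s) * \<bar>x s\<bar>))"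
    proof (rule integral_norm_bound_integral)
      show "(\<lambda>s. exp (-(w * (t - s))) * kernel t s * x s) integrable_on {0..t}"
        unfolding kernel_def by (intro continuous_atLeast_integrable_on continuous_intros p_cont p'_cont x_cont) auto
      show "(\<lambda>s. K * (exp (-((w / 2) * (t - s))) * (1 - p' s) * \<bar>x s\<bar>)) integrable_on {0..t}"
        by (intro continuous_atLeast_integrable_on continuous_intros p'_cont x_cont) auto
      show "norm (exp (-(w * (t - s))) * kernel t s * x s)
          \<le> K * (exp (-((w / 2) * (t - s))) * (1 - p' s) * \<bar>x s\<bar>)" if "s \<in> {0..t}" for s
        using mult_right_mono[OF K[of s t] abs_ge_zero[of "x s"]] that by (simp add: abs_mult mult_ac)
    qed
    then show ?thesis
      using x_minus_Y2_eq_integral[OF t] by (simp add: I_def)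
  qed
  then have "eventually (\<lambda>t. norm (x t - Y2 t) \<le> K * I t) at_top"
    by (auto simp: eventually_at_top_linorder intro!: exI[of _ 0])
  from tendsto_diff[OF x Lim_null_comparison[OF this lim]] show ?thesis by simp
qed

lemma smallo_A_phase_split:
  assumes L: "(\<lambda>t. sin (\<omega> * t) * P t - cos (\<omega> * t) * Q t) \<in> o[at_top](A)"
    and P: "(\<lambda>t. P (t + pi / (2 * \<omega>)) - P t) \<in> o[at_top](A)"
    and Q: "(\<lambda>t. Q (t + pi / (2 * \<omega>)) - Q t) \<in> o[at_top](A)"
  shows "P \<in> o[at_top](A)" "Q \<in> o[at_top](A)"
proof -
  define \<tau> where "\<tau> = pi / (2 * \<omega>)"
  have shift: "sin (\<omega> * (t + \<tau>)) = cos (\<omega> * t)" "cos (\<omega> * (t + \<tau>)) = - sin (\<omega> * t)" for t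
  proof -
    have "\<omega> * (t + \<tau>) = \<omega> * t + pi / 2" using \<omega>_pos by (simp add: \<tau>_def field_simps)
    then show "sin (\<omega> * (t + \<tau>)) = cos (\<omega> * t)" "cos (\<omega> * (t + \<tau>)) = - sin (\<omega> * t)"
      by (simp_all add: sin_add cos_add)
  qed
  have "(\<lambda>t. sin (\<omega> * (t + \<tau>)) * P (t + \<tau>) - cos (\<omega> * (t + \<tau>)) * Q (t + \<tau>)) \<in> o[at_top](A)"
    using smallo_A_shift[OF L, of \<tau>] \<omega>_pos by (simp add: \<tau>_def)
  then have L_shift: "(\<lambda>t. cos (\<omega> * t) * P (t + \<tau>) + sin (\<omega> * t) * Q (t + \<tau>)) \<in> o[at_top](A)"
    by (simp add: shift)
  have increments: "(\<lambda>t. cos (\<omega> * t) * (P (t + \<tau>) - P t) + sin (\<omega> * t) * (Q (t + \<tau>) - Q t)) \<in> o[at_top](A)"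
    using P Q by (intro sum_in_smallo(1) smallo_bounded_mult) (auto simp: \<tau>_def)
  have "(\<lambda>t. cos (\<omega> * t) * P t + sin (\<omega> * t) * Q t)
      = (\<lambda>t. (cos (\<omega> * t) * P (t + \<tau>) + sin (\<omega> * t) * Q (t + \<tau>))
           - (cos (\<omega> * t) * (P (t + \<tau>) - P t) + sin (\<omega> * t) * (Q (t + \<tau>) - Q t)))"
    by (simp add: fun_eq_iff algebra_simps)
  with sum_in_smallo(2)[OF L_shift increments]
  have L2: "(\<lambda>t. cos (\<omega> * t) * P t + sin (\<omega> * t) * Q t) \<in> o[at_top](A)"
    by simp
  have "(\<lambda>t. sin (\<omega> * t) * (sin (\<omega> * t) * P t - cos (\<omega> * t) * Q t)
      + cos (\<omega> * t) * (cos (\<omega> * t) * P t + sin (\<omega> * t) * Q t)) \<in> o[at_top](A)"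
    by (intro sum_in_smallo(1) smallo_bounded_mult L L2) auto
  moreover have "(\<lambda>t. sin (\<omega> * t) * (cos (\<omega> * t) * P t + sin (\<omega> * t) * Q t)
      - cos (\<omega> * t) * (sin (\<omega> * t) * P t - cos (\<omega> * t) * Q t)) \<in> o[at_top](A)"
    by (intro sum_in_smallo(2) smallo_bounded_mult L L2) auto
  moreover have "sin (\<omega> * t) * (sin (\<omega> * t) * P t - cos (\<omega> * t) * Q t)
      + cos (\<omega> * t) * (cos (\<omega> * t) * P t + sin (\<omega> * t) * Q t) = ((sin (\<omega> * t))\<^sup>2 + (cos (\<omega> * t))\<^sup>2) * P t"
    "sin (\<omega> * t) * (cos (\<omega> * t) * P t + sin (\<omega> * t) * Q t)
      - cos (\<omega> * t) * (sin (\<omega> * t) * P t - cos (\<omega> * t) * Q t) = ((sin (\<omega> * t))\<^sup>2 + (cos (\<omega> * t))\<^sup>2) * Q t"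
    for t
    by (simp_all add: algebra_simps power2_eq_square del: sin_cos_squared_add sin_cos_squared_add2 sin_cos_squared_add3)
  ultimately show "P \<in> o[at_top](A)" "Q \<in> o[at_top](A)" by simp_all
qed

lemma abs_cos_q_le: "s \<ge> 0 \<Longrightarrow> \<bar>cos (\<omega> * s) * q s\<bar> \<le> (p 0 / 4 + 1 / 2) * (p s - p' s)"
  and abs_sin_q_le: "s \<ge> 0 \<Longrightarrow> \<bar>sin (\<omega> * s) * q s\<bar> \<le> (p 0 / 4 + 1 / 2) * (p s - p' s)"
  using abs_q_le_p_minus_p'[of s]
    mult_right_mono[OF abs_cos_le_one[of "\<omega> * s"] abs_ge_zero[of "q s"]]
    mult_right_mono[OF abs_sin_le_one[of "\<omega> * s"] abs_ge_zero[of "q s"]]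
  by (simp_all add: abs_mult)

lemma Rc_Rs_in_smallo_A:
  assumes "(Y2 \<longlongrightarrow> 0) at_top"
  shows "Rc \<in> o[at_top](A)" "Rs \<in> o[at_top](A)"
  using assms \<omega>_pos
  by (auto intro!: Aint_in_smallo_A abs_osc_rem_le osc_rem_cont continuous_intros Y2_cont simp: abs_mult)

lemma Qc_Qs_in_smallo_A:
  assumes "(x \<longlongrightarrow> 0) at_top"
  shows "Qc \<in> o[at_top](A)" "Qs \<in> o[at_top](A)"
  using assms
  by (auto intro!: Aint_in_smallo_A abs_cos_q_le abs_sin_q_le continuous_intros q_cont x_cont)

lemma Kc_Ks_in_smallo_A:
  assumes x: "(x \<longlongrightarrow> 0) at_top"
  shows "Kc \<in> o[at_top](A)" "Ks \<in> o[at_top](A)"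
proof -
  define \<alpha> where "\<alpha> = w\<^sup>2 - w"
  define \<beta> where "\<beta> = 2 * w * \<omega>"
  define \<tau> where "\<tau> = pi / (2 * \<omega>)"
  have Y: "(Y2 \<longlongrightarrow> 0) at_top" by (rule Y2_tendsto_zero[OF x])
  have "(\<lambda>t. \<omega> * A t * (x t - Y2 t) - sin (\<omega> * t) * (Rc t + Qc t) + cos (\<omega> * t) * (Rs t + Qs t))
      \<in> o[at_top](A)"
  proof -
    have E: "(\<lambda>t. \<omega> * A t * (x t - Y2 t)) \<in> o[at_top](A)"
      using tendsto_zero_mult_in_smallo[OF tendsto_diff[OF x Y, simplified], of A] \<omega>_pos by (simp add: mult.assoc)
    show ?thesis
      using Rc_Rs_in_smallo_A[OF Y] Qc_Qs_in_smallo_A[OF x]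
      by (intro E sum_in_smallo smallo_bounded_mult; simp)+
  qed
  then have L: "(\<lambda>t. sin (\<omega> * t) * (\<alpha> * Kc t + \<beta> * Ks t) - cos (\<omega> * t) * (\<alpha> * Ks t - \<beta> * Kc t))
      \<in> o[at_top](A)"
  proof (rule smallo_cong_nonneg[THEN iffD1, rotated])
    fix t :: real assume t: "t \<ge> 0"
    show "\<omega> * A t * (x t - Y2 t) - sin (\<omega> * t) * (Rc t + Qc t) + cos (\<omega> * t) * (Rs t + Qs t)
      = sin (\<omega> * t) * (\<alpha> * Kc t + \<beta> * Ks t) - cos (\<omega> * t) * (\<alpha> * Ks t - \<beta> * Kc t)"
      unfolding sin_Wc_minus_cos_Ws[of t, unfolded Wc_eq[OF t] Ws_eq[OF t], symmetric]
      by (simp add: \<alpha>_def \<beta>_def algebra_simps)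
  qed
  have increments: "(\<lambda>t. Kc (t + \<tau>) - Kc t) \<in> o[at_top](A)" "(\<lambda>t. Ks (t + \<tau>) - Ks t) \<in> o[at_top](A)"
    using \<omega>_pos Y by (auto intro!: Aint_increment_in_smallo_A continuous_intros Y2_cont simp: \<tau>_def)
  have "(\<lambda>t. \<alpha> * (Kc (t + \<tau>) - Kc t) + \<beta> * (Ks (t + \<tau>) - Ks t)) \<in> o[at_top](A)"
    "(\<lambda>t. \<alpha> * (Ks (t + \<tau>) - Ks t) - \<beta> * (Kc (t + \<tau>) - Kc t)) \<in> o[at_top](A)"
    using increments by (intro sum_in_smallo; simp)+
  then have "(\<lambda>t. \<alpha> * Kc t + \<beta> * Ks t) \<in> o[at_top](A)" "(\<lambda>t. \<alpha> * Ks t - \<beta> * Kc t) \<in> o[at_top](A)"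
    using smallo_A_phase_split[OF L] by (simp_all add: \<tau>_def algebra_simps)
  moreover have "\<alpha>\<^sup>2 + \<beta>\<^sup>2 \<noteq> 0"
    using \<omega>_pos by (simp add: \<beta>_def add_nonneg_pos)
  ultimately show "Kc \<in> o[at_top](A)" "Ks \<in> o[at_top](A)"
    using smallo_of_rotation by blast+
qed

section \<open>Sufficiency of the conditions\<close>

definition energy :: "real \<Rightarrow> real" where
  "energy t = \<bar>Wc t\<bar> + \<bar>Ws t\<bar>"

lemma energy_cont: "continuous_on {0..} energy"
  unfolding energy_def[abs_def] by (intro continuous_intros Wosc_cont)

lemma omega_A_abs_x_minus_Y2_le: "\<omega> * (A t * \<bar>x t - Y2 t\<bar>) \<le> energy t"
proof -
  have "\<omega> * (A t * \<bar>x t - Y2 t\<bar>) = \<bar>sin (\<omega> * t) * Wc t - cos (\<omega> * t) * Ws t\<bar>"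
    unfolding sin_Wc_minus_cos_Ws using \<omega>_pos A_pos[of t] by (simp add: abs_mult)
  also have "\<dots> \<le> \<bar>sin (\<omega> * t)\<bar> * \<bar>Wc t\<bar> + \<bar>cos (\<omega> * t)\<bar> * \<bar>Ws t\<bar>"
    by (simp add: abs_mult[symmetric] abs_triangle_ineq4)
  also have "\<dots> \<le> 1 * \<bar>Wc t\<bar> + 1 * \<bar>Ws t\<bar>"
    by (intro add_mono mult_right_mono) auto
  finally show ?thesis by (simp add: energy_def)
qed

lemma A_abs_x_le: "A t * \<bar>x t\<bar> \<le> energy t / \<omega> + A t * \<bar>Y2 t\<bar>"
proof -
  have "A t * \<bar>x t - Y2 t\<bar> \<le> energy t / \<omega>"
    using omega_A_abs_x_minus_Y2_le[of t] \<omega>_pos by (simp add: pos_le_divide_eq mult.commute)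
  moreover have "\<bar>x t\<bar> \<le> \<bar>x t - Y2 t\<bar> + \<bar>Y2 t\<bar>"
    using abs_triangle_ineq[of "x t - Y2 t" "Y2 t"] by simp
  from mult_left_mono[OF this less_imp_le[OF A_pos[of t]]]
  have "A t * \<bar>x t\<bar> \<le> A t * \<bar>x t - Y2 t\<bar> + A t * \<bar>Y2 t\<bar>"
    by (simp add: distrib_left)
  ultimately show ?thesis by linarith
qed

lemma abs_Aint_q_x_le:
  assumes g: "continuous_on {0..} g" "\<And>s. \<bar>g s\<bar> \<le> 1" and t: "0 \<le> t"
  shows "\<bar>Aint (\<lambda>s. g s * q s) x t\<bar>
    \<le> integral {0..t} (\<lambda>s. \<bar>q s\<bar> / \<omega> * energy s) + Aint (\<lambda>s. \<bar>q s\<bar>) (\<lambda>s. \<bar>Y2 s\<bar>) t"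
proof -
  have int: "(\<lambda>s. \<bar>q s\<bar> / \<omega> * energy s) integrable_on {0..t}"
    "(\<lambda>s. \<bar>q s\<bar> * A s * \<bar>Y2 s\<bar>) integrable_on {0..t}"
    using t \<omega>_pos by (auto intro!: continuous_atLeast_integrable_on continuous_intros q_cont energy_cont A_cont Y2_cont)
  have "norm (Aint (\<lambda>s. g s * q s) x t)
      \<le> integral {0..t} (\<lambda>s. \<bar>q s\<bar> / \<omega> * energy s + \<bar>q s\<bar> * A s * \<bar>Y2 s\<bar>)"
    unfolding Aint_def
  proof (rule integral_norm_bound_integral)
    show "(\<lambda>s. g s * q s * A s * x s) integrable_on {0..t}"
      using t by (auto intro!: continuous_atLeast_integrable_on continuous_intros g q_cont A_cont x_cont)
    show "(\<lambda>s. \<bar>q s\<bar> / \<omega> * energy s + \<bar>q s\<bar> * A s * \<bar>Y2 s\<bar>) integrable_on {0..t}"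
      using int by (rule integrable_add)
    fix s
    have "norm (g s * q s * A s * x s) = \<bar>g s\<bar> * (\<bar>q s\<bar> * (A s * \<bar>x s\<bar>))"
      using A_pos[of s] by (simp add: abs_mult)
    also have "\<dots> \<le> 1 * (\<bar>q s\<bar> * (A s * \<bar>x s\<bar>))"
      using g(2)[of s] A_pos[of s] by (intro mult_right_mono) auto
    also have "\<dots> \<le> \<bar>q s\<bar> * (energy s / \<omega> + A s * \<bar>Y2 s\<bar>)"
      using mult_left_mono[OF A_abs_x_le[of s] abs_ge_zero[of "q s"]] by simp
    finally show "norm (g s * q s * A s * x s) \<le> \<bar>q s\<bar> / \<omega> * energy s + \<bar>q s\<bar> * A s * \<bar>Y2 s\<bar>"
      by (simp add: algebra_simps)
  qed
  also have "\<dots> = integral {0..t} (\<lambda>s. \<bar>q s\<bar> / \<omega> * energy s) + Aint (\<lambda>s. \<bar>q s\<bar>) (\<lambda>s. \<bar>Y2 s\<bar>) t"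
    unfolding Aint_def using int by (rule Henstock_Kurzweil_Integration.integral_add)
  finally show ?thesis by simp
qed

lemma energy_integral_inequality:
  assumes t: "0 \<le> t"
  shows "energy t \<le> \<bar>Wc t - Qc t\<bar> + \<bar>Ws t - Qs t\<bar> + 2 * Aint (\<lambda>s. \<bar>q s\<bar>) (\<lambda>s. \<bar>Y2 s\<bar>) t
    + integral {0..t} (\<lambda>s. 2 * \<bar>q s\<bar> / \<omega> * energy s)"
proof -
  have "\<bar>Qc t\<bar> \<le> integral {0..t} (\<lambda>s. \<bar>q s\<bar> / \<omega> * energy s) + Aint (\<lambda>s. \<bar>q s\<bar>) (\<lambda>s. \<bar>Y2 s\<bar>) t"
    "\<bar>Qs t\<bar> \<le> integral {0..t} (\<lambda>s. \<bar>q s\<bar> / \<omega> * energy s) + Aint (\<lambda>s. \<bar>q s\<bar>) (\<lambda>s. \<bar>Y2 s\<bar>) t"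
    by (rule abs_Aint_q_x_le[OF _ _ t]; auto intro!: continuous_intros)+
  moreover have "integral {0..t} (\<lambda>s. 2 * \<bar>q s\<bar> / \<omega> * energy s)
      = 2 * integral {0..t} (\<lambda>s. \<bar>q s\<bar> / \<omega> * energy s)"
  proof -
    have "(\<lambda>s. 2 * \<bar>q s\<bar> / \<omega> * energy s) = (\<lambda>s. 2 * (\<bar>q s\<bar> / \<omega> * energy s))"
      by (rule ext) simp
    then show ?thesis by (simp only: integral_mult_right)
  qed
  moreover have "energy t \<le> (\<bar>Wc t - Qc t\<bar> + \<bar>Qc t\<bar>) + (\<bar>Ws t - Qs t\<bar> + \<bar>Qs t\<bar>)"
    unfolding energy_def
    using abs_triangle_ineq[of "Wc t - Qc t" "Qc t"] abs_triangle_ineq[of "Ws t - Qs t" "Qs t"]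
    by (intro add_mono) simp_all
  ultimately show ?thesis by linarith
qed

lemma integral_p_sq_tail:
  assumes e: "e > 0"
  shows "\<exists>T\<ge>0. \<forall>a t. T \<le> a \<longrightarrow> a \<le> t \<longrightarrow> integral {a..t} (\<lambda>s. (p s)\<^sup>2) \<le> e"
proof -
  define G where "G t = integral {0..t} (\<lambda>s. (p s)\<^sup>2)" for t
  have psq: "continuous_on {0..} (\<lambda>s. (p s)\<^sup>2)" by (intro continuous_intros p_cont)
  have diff: "integral {a..b} (\<lambda>s. (p s)\<^sup>2) = G b - G a" if "0 \<le> a" "a \<le> b" for a b
    using continuous_atLeast_integral_combine[OF psq that] by (simp add: G_def)
  have mono: "G a \<le> G b" if "0 \<le> a" "a \<le> b" for a b
    using diff[OF that] integral_nonneg[OF continuous_atLeast_integrable_on[OF psq that(1)], of b] by simp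
  have bound: "G t \<le> (LINT s:{0..}|lborel. (p s)\<^sup>2)" if "t \<ge> 0" for t
  proof -
    have "G t = (LINT s:{0..t}|lborel. (p s)\<^sup>2)"
      unfolding G_def by (rule continuous_atLeast_set_integral_eq[OF psq, symmetric]) simp
    also have "\<dots> \<le> (LINT s:{0..}|lborel. (p s)\<^sup>2)"
      unfolding set_lebesgue_integral_def
    proof (rule integral_mono')
      show "integrable lborel (\<lambda>s. indicator {0..} s *\<^sub>R (p s)\<^sup>2)"
        using p_sq_int unfolding set_integrable_def .
      show "indicator {0..t} s *\<^sub>R (p s)\<^sup>2 \<le> indicator {0..} s *\<^sub>R (p s)\<^sup>2" for s :: real
        by (auto simp: indicator_def)
      show "0 \<le> indicator {0..} s *\<^sub>R (p s)\<^sup>2" for s :: real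
        by (auto simp: indicator_def)
    qed
    finally show ?thesis .
  qed
  obtain T where T: "T \<ge> 0" "\<forall>t\<ge>T. G t - G T \<le> e"
    using bounded_mono_tail_le[of G, OF mono bound e] by auto
  have "integral {a..t} (\<lambda>s. (p s)\<^sup>2) \<le> e" if "T \<le> a" "a \<le> t" for a t
  proof -
    have "G t - G T \<le> e" using T that by auto
    moreover have "G T \<le> G a" using mono[of T a] T(1) that by simp
    ultimately show ?thesis using diff[of a t] T(1) that by simp
  qed
  with T(1) show ?thesis by blast
qed

lemma p_tail:
  assumes e: "e > 0"
  shows "\<exists>T\<ge>0. \<forall>a t. T \<le> a \<longrightarrow> a \<le> t \<longrightarrow> p a - p t \<le> e"
proof -
  obtain T where T: "T \<ge> 0" "\<forall>t\<ge>T. - p t - - p T \<le> e"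
    using bounded_mono_tail_le[of "\<lambda>t. - p t" 0 e] p_antimono p_pos e by (force intro: less_imp_le)
  have "p a - p t \<le> e" if "T \<le> a" "a \<le> t" for a t
  proof -
    have "- p t - - p T \<le> e" using T that by auto
    moreover have "p a \<le> p T" using p_antimono[of T a] T(1) that by simp
    ultimately show ?thesis by simp
  qed
  with T(1) show ?thesis by blast
qed

lemma integral_abs_q_tail:
  assumes e: "e > 0"
  shows "\<exists>T\<ge>0. \<forall>t\<ge>T. integral {T..t} (\<lambda>s. \<bar>q s\<bar>) \<le> e"
proof -
  obtain T1 where T1: "T1 \<ge> 0" "\<forall>a t. T1 \<le> a \<longrightarrow> a \<le> t \<longrightarrow> integral {a..t} (\<lambda>s. (p s)\<^sup>2) \<le> e"
    using integral_p_sq_tail[OF e] by blast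
  obtain T2 where T2: "T2 \<ge> 0" "\<forall>a t. T2 \<le> a \<longrightarrow> a \<le> t \<longrightarrow> p a - p t \<le> e"
    using p_tail[OF e] by blast
  define T where "T = max T1 T2"
  have T: "T \<ge> 0" "T1 \<le> T" "T2 \<le> T" using T1 T2 by (auto simp: T_def)
  have "integral {T..t} (\<lambda>s. \<bar>q s\<bar>) \<le> e" if t: "T \<le> t" for t
  proof -
    have int: "(\<lambda>s. (1/4) * (p s)\<^sup>2) integrable_on {T..t}" "(\<lambda>s. (1/2) * (- p' s)) integrable_on {T..t}"
      using T by (auto intro!: continuous_atLeast_integrable_on continuous_intros p_cont p'_cont)
    have "integral {T..t} (\<lambda>s. \<bar>q s\<bar>) \<le> integral {T..t} (\<lambda>s. (1/4) * (p s)\<^sup>2 + (1/2) * (- p' s))"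
    proof (rule integral_le)
      show "(\<lambda>s. \<bar>q s\<bar>) integrable_on {T..t}"
        using T by (auto intro!: continuous_atLeast_integrable_on continuous_intros q_cont)
      show "(\<lambda>s. (1/4) * (p s)\<^sup>2 + (1/2) * (- p' s)) integrable_on {T..t}"
        using int by (rule integrable_add)
      show "\<bar>q s\<bar> \<le> (1/4) * (p s)\<^sup>2 + (1/2) * (- p' s)" if "s \<in> {T..t}" for s
        using abs_q_le[of s] that T by simp
    qed
    also have "\<dots> = (1/4) * integral {T..t} (\<lambda>s. (p s)\<^sup>2) + (1/2) * integral {T..t} (\<lambda>s. - p' s)"
      by (simp only: Henstock_Kurzweil_Integration.integral_add[OF int] integral_mult_right)
    also have "integral {T..t} (\<lambda>s. - p' s) = p T - p t"
      using integral_unique[OF has_integral_neg[OF p'_has_integral[OF T(1) t]]] by simp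
    moreover have "integral {T..t} (\<lambda>s. (p s)\<^sup>2) \<le> e" "p T - p t \<le> e"
      using T1(2) T2(2) T t by auto
    ultimately show ?thesis using e by linarith
  qed
  with T(1) show ?thesis by blast
qed

lemma energy_in_smallo_A:
  assumes Y: "(Y2 \<longlongrightarrow> 0) at_top" and K: "Kc \<in> o[at_top](A)" "Ks \<in> o[at_top](A)"
  shows "energy \<in> o[at_top](A)"
proof -
  define B where "B t = \<bar>Wc t - Qc t\<bar> + \<bar>Ws t - Qs t\<bar> + 2 * Aint (\<lambda>s. \<bar>q s\<bar>) (\<lambda>s. \<bar>Y2 s\<bar>) t" for t
  have "(\<lambda>t. (w\<^sup>2 - w) * Kc t + 2 * w * \<omega> * Ks t + Rc t) \<in> o[at_top](A)"
    using K Rc_Rs_in_smallo_A[OF Y] by (intro sum_in_smallo; simp)+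
  then have "(\<lambda>t. Wc t - Qc t) \<in> o[at_top](A)"
    by (rule smallo_cong_nonneg[THEN iffD1, rotated]) (simp add: Wc_eq)
  moreover have "(\<lambda>t. (w\<^sup>2 - w) * Ks t - 2 * w * \<omega> * Kc t + Rs t) \<in> o[at_top](A)"
    using K Rc_Rs_in_smallo_A[OF Y] by (intro sum_in_smallo; simp)+
  then have "(\<lambda>t. Ws t - Qs t) \<in> o[at_top](A)"
    by (rule smallo_cong_nonneg[THEN iffD1, rotated]) (simp add: Ws_eq)
  moreover have "Aint (\<lambda>s. \<bar>q s\<bar>) (\<lambda>s. \<bar>Y2 s\<bar>) \<in> o[at_top](A)"
  proof (rule Aint_in_smallo_A[where C="p 0 / 4 + 1 / 2"])
    show "\<bar>\<bar>q s\<bar>\<bar> \<le> (p 0 / 4 + 1 / 2) * (p s - p' s)" if "s \<ge> 0" for s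
      using abs_q_le_p_minus_p'[OF that] by simp
  qed (use Y in \<open>auto intro!: tendsto_rabs_zero continuous_intros q_cont Y2_cont\<close>)
  ultimately have Bo: "B \<in> o[at_top](A)"
    unfolding B_def[abs_def] by (intro sum_in_smallo) simp_all
  have Bc: "continuous_on {0..} B"
    unfolding B_def[abs_def] by (intro continuous_intros Wosc_cont Aint_cont q_cont x_cont Y2_cont)
  obtain Ta where Ta: "Ta \<ge> 0" "\<forall>t\<ge>Ta. integral {Ta..t} (\<lambda>s. \<bar>q s\<bar>) \<le> \<omega> / 4"
    using integral_abs_q_tail[of "\<omega> / 4"] \<omega>_pos by auto
  have tail: "integral {Ta..t} (\<lambda>s. 2 * \<bar>q s\<bar> / \<omega>) \<le> 1/2" if "Ta \<le> t" for t
  proof -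
    have "(\<lambda>s. 2 * \<bar>q s\<bar> / \<omega>) = (\<lambda>s. (2 / \<omega>) * \<bar>q s\<bar>)"
      by (rule ext) simp
    then have "integral {Ta..t} (\<lambda>s. 2 * \<bar>q s\<bar> / \<omega>) = (2 / \<omega>) * integral {Ta..t} (\<lambda>s. \<bar>q s\<bar>)"
      by (simp only: integral_mult_right)
    also have "\<dots> \<le> (2 / \<omega>) * (\<omega> / 4)"
      using Ta that \<omega>_pos by (intro mult_left_mono) auto
    finally show ?thesis using \<omega>_pos by simp
  qed
  show ?thesis
  proof (rule gronwall_smallo_A[where B=B and k="\<lambda>s. 2 * \<bar>q s\<bar> / \<omega>" and Ta=Ta])
    show "continuous_on {0..} (\<lambda>s. 2 * \<bar>q s\<bar> / \<omega>)"
      using \<omega>_pos by (intro continuous_intros q_cont) auto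
    show "energy t \<le> B t + integral {0..t} (\<lambda>s. 2 * \<bar>q s\<bar> / \<omega> * energy s)" if "t \<ge> 0" for t
      unfolding B_def by (rule energy_integral_inequality[OF that])
    show "energy t \<ge> 0" for t by (simp add: energy_def)
    show "2 * \<bar>q s\<bar> / \<omega> \<ge> 0" for s using \<omega>_pos by simp
  qed (fact energy_cont Bc Bo Ta(1) tail)+
qed

lemma x_tendsto_zero_if:
  assumes Y: "(Y2 \<longlongrightarrow> 0) at_top" and K: "Kc \<in> o[at_top](A)" "Ks \<in> o[at_top](A)"
  shows "(x \<longlongrightarrow> 0) at_top"
proof -
  have "(\<lambda>t. A t * (x t - Y2 t)) \<in> O[at_top](energy)"
  proof (intro bigoI[of _ "1 / \<omega>"] always_eventually allI)
    fix t
    have "\<omega> * \<bar>A t * (x t - Y2 t)\<bar> \<le> \<bar>energy t\<bar>"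
      using omega_A_abs_x_minus_Y2_le[of t] A_pos[of t] by (simp add: abs_mult)
    then show "norm (A t * (x t - Y2 t)) \<le> 1 / \<omega> * norm (energy t)"
      using \<omega>_pos by (simp add: field_simps)
  qed
  from landau_o.big_small_trans[OF this energy_in_smallo_A[OF assms]]
  have "((\<lambda>t. A t * (x t - Y2 t) / A t) \<longlongrightarrow> 0) at_top"
    by (rule smalloD_tendsto)
  moreover have "A t \<noteq> 0" for t using A_pos[of t] by simp
  ultimately have "((\<lambda>t. x t - Y2 t) \<longlongrightarrow> 0) at_top" by simp
  from tendsto_add[OF this Y] show ?thesis by simp
qed

lemma x_tendsto_zero_iff:
  "(x \<longlongrightarrow> 0) at_top \<longleftrightarrow> (Y2 \<longlongrightarrow> 0) at_top \<and> Kc \<in> o[at_top](A) \<and> Ks \<in> o[at_top](A)"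
  using Y2_tendsto_zero Kc_Ks_in_smallo_A x_tendsto_zero_if by blast

lemma set_integral_y2fun_eq_Aint:
  assumes g: "continuous_on {0..} g" and t: "0 \<le> t"
  shows "(LINT s:{0..t}|lborel. g s * A s * y2fun \<omega> f s) = Aint g Y2 t"
proof -
  have "(LINT s:{0..t}|lborel. g s * A s * y2fun \<omega> f s) = (LINT s:{0..t}|lborel. g s * A s * Y2 s)"
    by (rule set_lebesgue_integral_cong) (auto simp: y2fun_eq)
  also have "\<dots> = Aint g Y2 t"
    unfolding Aint_def
    by (intro continuous_atLeast_set_integral_eq continuous_intros g A_cont Y2_cont) simp
  finally show ?thesis .
qed

end

theorem mainTheorem16:
  fixes \<omega> :: real and p p' f x x' :: "real \<Rightarrow> real"
  assumes \<omega>_pos: "\<omega> > 0"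
    and p_deriv: "\<And>t. t \<ge> 0 \<Longrightarrow> (p has_real_derivative p' t) (at t within {0..})"
    and p'_cont: "continuous_on {0..} p'"
    and p_pos: "\<And>t. t \<ge> 0 \<Longrightarrow> p t > 0"
    and p'_neg: "\<And>t. t \<ge> 0 \<Longrightarrow> p' t < 0"
    and p_int_div: "filterlim (\<lambda>t. integral {0..t} p) at_top at_top"
    and p_sq_int: "set_integrable lborel {0..} (\<lambda>t. (p t)^2)"
    and f_loc: "\<And>t. t \<ge> 0 \<Longrightarrow> set_integrable lborel {0..t} f"
    and x_deriv: "\<And>t. t \<ge> 0 \<Longrightarrow> (x has_real_derivative x' t) (at t within {0..})"
    and x'_cont: "continuous_on {0..} x'"
    and x_ode: "\<And>t. t \<ge> 0 \<Longrightarrow>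
        x' t = x' 0 + set_lebesgue_integral lborel {0..t}
                 (\<lambda>s. f s - p s * x' s - \<omega>^2 * x s)"
    and x0: "x 0 = 0" and x'0: "x' 0 = 0"
  shows "(x \<longlongrightarrow> 0) at_top \<longleftrightarrow>
          ((y2fun \<omega> f \<longlongrightarrow> 0) at_top
           \<and> (\<lambda>t. set_lebesgue_integral lborel {0..t}
                  (\<lambda>s. cos (\<omega> * s) * Afun p s * y2fun \<omega> f s)) \<in> o[at_top](Afun p)
           \<and> (\<lambda>t. set_lebesgue_integral lborel {0..t}
                  (\<lambda>s. sin (\<omega> * s) * Afun p s * y2fun \<omega> f s)) \<in> o[at_top](Afun p))"
proof -
  interpret damped_oscillator \<omega> p p' f x x'
    by unfold_locales (fact assms)+
  have "(y2fun \<omega> f \<longlongrightarrow> 0) at_top \<longleftrightarrow> (Y2 \<longlongrightarrow> 0) at_top"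
    by (rule tendsto_cong_nonneg) (simp add: y2fun_eq)
  moreover have "(\<lambda>t. LINT s:{0..t}|lborel. cos (\<omega> * s) * A s * y2fun \<omega> f s) \<in> o[at_top](A)
      \<longleftrightarrow> Kc \<in> o[at_top](A)"
    "(\<lambda>t. LINT s:{0..t}|lborel. sin (\<omega> * s) * A s * y2fun \<omega> f s) \<in> o[at_top](A)
      \<longleftrightarrow> Ks \<in> o[at_top](A)"
    by (auto intro!: smallo_cong_nonneg set_integral_y2fun_eq_Aint continuous_intros)
  ultimately show ?thesis
    using x_tendsto_zero_iff by simp
qed

end
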